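(* Let $\Bbbk$ be a field, $A$ a $\Bbbk$-algebra, $\Gamma$ a subalgebra, and $\sim$ an equivalence relation on $\mathrm{cfs}(\Gamma)$ such that $\Gamma$ is a strong Harish-Chandra block subalgebra of $A$ with respect to $\sim$. Let $B\in\mathrm{cfs}(\Gamma)/{\sim}$. Suppose $B$ is finite, $\Gamma$ is noetherian, and $\mathcal A(B,B)$ is finitely generated as a left and as a right $\hat\Gamma_B$-module. Then: (i) there are finitely many isomorphism classes of simple Harish-Chandra block modules $V$ with $B\in\mathrm{Supp}(V)$; (ii) if $V$ is a simple Harish-Chandra block module, then $V(B)$ is finite-dimensional.
   Context: All algebras are associative unital $\Bbbk$-algebras. $\mathrm{cfs}(\Gamma)$ is the set of maximal two-sided ideals $\mathfrak m$ with $\dim\Gamma/\mathfrak m<\infty$. For a class $B$, $\mathcal W(B)=\{\mathfrak m_1\cdots\mathfrak m_k:k\ge0,\ \mathfrak m_i\in B\}$. For a left $\Gamma$-module $V$, $V(B)=\{v:\mathfrak mv=0$ for some $\mathfrak m\in\mathcal W(B)\}$ (analogously for right modules); $V$ is a block module if $V=\bigoplus_BV(B)$, $\mathrm{Supp}(V)=\{B:V(B)\ne0\}$, and a strong block module if also each $V(B)$ is killed by some $\mathfrak m\in\mathcal W(B)$. A Harish-Chandra block module is an $A$-module that is a block module over $\Gamma$. $\Gamma$ is a strong Harish-Chandra block subalgebra of $A$ if for all $B$ and $\mathfrak m\in\mathcal W(B)$, the left $A$-module $A/A\mathfrak m$ and the right module $A/\mathfrak mA$ are strong block modules over $\Gamma$.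 $\hat\Gamma_B=\varprojlim_{\mathfrak m\in\mathcal W(B)}\Gamma/\mathfrak m$ and $\mathcal A(B,B)=\varprojlim_{\mathfrak n,\mathfrak m\in\mathcal W(B)}A/(\mathfrak nA+A\mathfrak m)$, which is a $(\hat\Gamma_B,\hat\Gamma_B)$-bimodule via the natural actions of $\Gamma/\mathfrak n$ on the left and $\Gamma/\mathfrak m$ on the right of $A/(\mathfrak nA+A\mathfrak m)$. *)

theory Defs
  imports Main
begin

text \<open>The algebra A is the whole type 'a (a unital ring), with scalar multiplication
  sc by the field 'k.\<close>

definition k_algebra :: "('k::field \<Rightarrow> 'a::ring_1 \<Rightarrow> 'a) \<Rightarrow> bool" where
  "k_algebra sc \<longleftrightarrow>
     (\<forall>c x y. sc c (x + y) = sc c x + sc c y) \<and>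
     (\<forall>c d x. sc (c + d) x = sc c x + sc d x) \<and>
     (\<forall>c d x. sc (c * d) x = sc c (sc d x)) \<and>
     (\<forall>x. sc 1 x = x) \<and>
     (\<forall>c x y. sc c (x * y) = sc c x * y \<and> sc c (x * y) = x * sc c y)"

definition subalgebra :: "('k::field \<Rightarrow> 'a::ring_1 \<Rightarrow> 'a) \<Rightarrow> 'a set \<Rightarrow> bool" where
  "subalgebra sc G \<longleftrightarrow> 0 \<in> G \<and> 1 \<in> G \<and>
     (\<forall>x\<in>G. \<forall>y\<in>G. x + y \<in> G \<and> x * y \<in> G) \<and> (\<forall>c. \<forall>x\<in>G. sc c x \<in> G)"

inductive_set addcl :: "'a::monoid_add set \<Rightarrow> 'a set" for S where
  addcl_zero: "0 \<in> addcl S"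
| addcl_add: "x \<in> S \<Longrightarrow> y \<in> addcl S \<Longrightarrow> x + y \<in> addcl S"

definition tsideal :: "'a::ring_1 set \<Rightarrow> 'a set \<Rightarrow> bool" where
  "tsideal G I \<longleftrightarrow> I \<subseteq> G \<and> 0 \<in> I \<and> (\<forall>x\<in>I. \<forall>y\<in>I. x + y \<in> I) \<and> (\<forall>x\<in>I. - x \<in> I) \<and>
     (\<forall>g\<in>G. \<forall>x\<in>I. g * x \<in> I \<and> x * g \<in> I)"

definition left_ideal :: "'a::ring_1 set \<Rightarrow> 'a set \<Rightarrow> bool" where
  "left_ideal G I \<longleftrightarrow> I \<subseteq> G \<and> 0 \<in> I \<and> (\<forall>x\<in>I. \<forall>y\<in>I. x + y \<in> I) \<and> (\<forall>x\<in>I. - x \<in> I) \<and>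
     (\<forall>g\<in>G. \<forall>x\<in>I. g * x \<in> I)"

definition right_ideal :: "'a::ring_1 set \<Rightarrow> 'a set \<Rightarrow> bool" where
  "right_ideal G I \<longleftrightarrow> I \<subseteq> G \<and> 0 \<in> I \<and> (\<forall>x\<in>I. \<forall>y\<in>I. x + y \<in> I) \<and> (\<forall>x\<in>I. - x \<in> I) \<and>
     (\<forall>g\<in>G. \<forall>x\<in>I. x * g \<in> I)"

definition noetherian :: "'a::ring_1 set \<Rightarrow> bool" where
  "noetherian G \<longleftrightarrow>
     (\<forall>I :: nat \<Rightarrow> 'a set. (\<forall>n. left_ideal G (I n) \<and> I n \<subseteq> I (Suc n)) \<longrightarrow> (\<exists>N. \<forall>n\<ge>N. I n = I N)) \<and>
     (\<forall>I :: nat \<Rightarrow> 'a set. (\<forall>n. right_ideal G (I n) \<and> I n \<subseteq> I (Suc n)) \<longrightarrow> (\<exists>N. \<forall>n\<ge>N. I n = I N))"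

definition max_ideal :: "'a::ring_1 set \<Rightarrow> 'a set \<Rightarrow> bool" where
  "max_ideal G m \<longleftrightarrow> tsideal G m \<and> m \<noteq> G \<and> (\<forall>J. tsideal G J \<and> m \<subseteq> J \<and> J \<noteq> G \<longrightarrow> J = m)"

definition fin_codim :: "('k::field \<Rightarrow> 'a::ring_1 \<Rightarrow> 'a) \<Rightarrow> 'a set \<Rightarrow> 'a set \<Rightarrow> bool" where
  "fin_codim sc G m \<longleftrightarrow> (\<exists>S. finite S \<and> S \<subseteq> G \<and> (\<forall>x\<in>G. \<exists>c. x - (\<Sum>s\<in>S. sc (c s) s) \<in> m))"

definition cfs :: "('k::field \<Rightarrow> 'a::ring_1 \<Rightarrow> 'a) \<Rightarrow> 'a set \<Rightarrow> 'a set set" where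
  "cfs sc G = {m. max_ideal G m \<and> fin_codim sc G m}"

definition ideal_mult :: "'a::ring_1 set \<Rightarrow> 'a set \<Rightarrow> 'a set" where
  "ideal_mult I J = addcl {a * b | a b. a \<in> I \<and> b \<in> J}"

fun ideal_prod :: "'a::ring_1 set \<Rightarrow> 'a set list \<Rightarrow> 'a set" where
  "ideal_prod G [] = G"
| "ideal_prod G (m # ms) = ideal_mult m (ideal_prod G ms)"

text \<open>W(B): all finite products of ideals from B (empty product = G).\<close>
definition Wset :: "'a::ring_1 set \<Rightarrow> 'a set set \<Rightarrow> 'a set set" where
  "Wset G Bk = {ideal_prod G ms | ms. set ms \<subseteq> Bk}"

text \<open>Generic: the module is M/N where M is a subset of an abelian group type 'm and N a
  submodule; act x v is the action of x. Actual modules are the case N = {0}.\<close>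

definition vsub :: "'a::ring_1 set \<Rightarrow> 'm::ab_group_add set \<Rightarrow> 'm set \<Rightarrow> ('a \<Rightarrow> 'm \<Rightarrow> 'm) \<Rightarrow> 'a set set \<Rightarrow> 'm set" where
  "vsub G M N act Bk = {v \<in> M. \<exists>m\<in>Wset G Bk. \<forall>x\<in>m. act x v \<in> N}"

definition blocks :: "('k::field \<Rightarrow> 'a::ring_1 \<Rightarrow> 'a) \<Rightarrow> 'a set \<Rightarrow> ('a set \<times> 'a set) set \<Rightarrow> 'a set set set" where
  "blocks sc G R = cfs sc G // R"

definition block_family :: "('k::field \<Rightarrow> 'a::ring_1 \<Rightarrow> 'a) \<Rightarrow> 'a set \<Rightarrow> ('a set \<times> 'a set) set \<Rightarrow>
    'm::ab_group_add set \<Rightarrow> 'm set \<Rightarrow> ('a \<Rightarrow> 'm \<Rightarrow> 'm) \<Rightarrow> ('a set set \<Rightarrow> 'm) \<Rightarrow> bool" where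
  "block_family sc G R M N act f \<longleftrightarrow> finite {Bk. f Bk \<noteq> 0} \<and>
     (\<forall>Bk. f Bk \<noteq> 0 \<longrightarrow> Bk \<in> blocks sc G R \<and> f Bk \<in> vsub G M N act Bk)"

text \<open>M/N is the direct sum of the (M/N)(B), B ranging over the blocks.\<close>
definition block_mod :: "('k::field \<Rightarrow> 'a::ring_1 \<Rightarrow> 'a) \<Rightarrow> 'a set \<Rightarrow> ('a set \<times> 'a set) set \<Rightarrow>
    'm::ab_group_add set \<Rightarrow> 'm set \<Rightarrow> ('a \<Rightarrow> 'm \<Rightarrow> 'm) \<Rightarrow> bool" where
  "block_mod sc G R M N act \<longleftrightarrow>
     (\<forall>v\<in>M. \<exists>f. block_family sc G R M N act f \<and> v - (\<Sum>Bk\<in>{Bk. f Bk \<noteq> 0}. f Bk) \<in> N) \<and>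
     (\<forall>f. block_family sc G R M N act f \<and> (\<Sum>Bk\<in>{Bk. f Bk \<noteq> 0}. f Bk) \<in> N \<longrightarrow> (\<forall>Bk. f Bk \<in> N))"

definition strong_block_mod :: "('k::field \<Rightarrow> 'a::ring_1 \<Rightarrow> 'a) \<Rightarrow> 'a set \<Rightarrow> ('a set \<times> 'a set) set \<Rightarrow>
    'm::ab_group_add set \<Rightarrow> 'm set \<Rightarrow> ('a \<Rightarrow> 'm \<Rightarrow> 'm) \<Rightarrow> bool" where
  "strong_block_mod sc G R M N act \<longleftrightarrow> block_mod sc G R M N act \<and>
     (\<forall>Bk\<in>blocks sc G R. \<exists>m\<in>Wset G Bk. \<forall>x\<in>m. \<forall>v\<in>vsub G M N act Bk. act x v \<in> N)"

definition supp :: "('k::field \<Rightarrow> 'a::ring_1 \<Rightarrow> 'a) \<Rightarrow> 'a set \<Rightarrow> ('a set \<times> 'a set) set \<Rightarrow>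
    'm::ab_group_add set \<Rightarrow> 'm set \<Rightarrow> ('a \<Rightarrow> 'm \<Rightarrow> 'm) \<Rightarrow> 'a set set set" where
  "supp sc G R M N act = {Bk \<in> blocks sc G R. \<not> vsub G M N act Bk \<subseteq> N}"

text \<open>Gamma is a strong Harish-Chandra block subalgebra of A (= UNIV):
  A/Am (left, via left multiplication) and A/mA (right, via right multiplication)
  are strong block modules over Gamma.\<close>
definition strong_HC_block_subalg :: "('k::field \<Rightarrow> 'a::ring_1 \<Rightarrow> 'a) \<Rightarrow> 'a set \<Rightarrow> ('a set \<times> 'a set) set \<Rightarrow> bool" where
  "strong_HC_block_subalg sc G R \<longleftrightarrow>
     (\<forall>Bk\<in>blocks sc G R. \<forall>m\<in>Wset G Bk.
        strong_block_mod sc G R (UNIV :: 'a set) (addcl {a * x | a x. x \<in> m}) (\<lambda>x v. x * v) \<and>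
        strong_block_mod sc G R (UNIV :: 'a set) (addcl {x * a | x a. x \<in> m}) (\<lambda>x v. v * x))"

definition amod :: "'m::ab_group_add set \<Rightarrow> ('a::ring_1 \<Rightarrow> 'm \<Rightarrow> 'm) \<Rightarrow> bool" where
  "amod M act \<longleftrightarrow> 0 \<in> M \<and> (\<forall>v\<in>M. \<forall>w\<in>M. v + w \<in> M) \<and> (\<forall>v\<in>M. - v \<in> M) \<and>
     (\<forall>a. \<forall>v\<in>M. act a v \<in> M) \<and>
     (\<forall>a. \<forall>v\<in>M. \<forall>w\<in>M. act a (v + w) = act a v + act a w) \<and>
     (\<forall>a b. \<forall>v\<in>M. act (a + b) v = act a v + act b v) \<and>
     (\<forall>a b. \<forall>v\<in>M. act (a * b) v = act a (act b v)) \<and>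
     (\<forall>v\<in>M. act 1 v = v)"

definition simple_amod :: "'m::ab_group_add set \<Rightarrow> ('a::ring_1 \<Rightarrow> 'm \<Rightarrow> 'm) \<Rightarrow> bool" where
  "simple_amod M act \<longleftrightarrow> amod M act \<and> M \<noteq> {0} \<and>
     (\<forall>N. N \<subseteq> M \<and> 0 \<in> N \<and> (\<forall>v\<in>N. \<forall>w\<in>N. v + w \<in> N) \<and> (\<forall>v\<in>N. - v \<in> N) \<and>
          (\<forall>a. \<forall>v\<in>N. act a v \<in> N) \<longrightarrow> N = {0} \<or> N = M)"

definition amod_iso :: "'m::ab_group_add set \<Rightarrow> ('a::ring_1 \<Rightarrow> 'm \<Rightarrow> 'm) \<Rightarrow> 'm set \<Rightarrow> ('a \<Rightarrow> 'm \<Rightarrow> 'm) \<Rightarrow> bool" where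
  "amod_iso M act M' act' \<longleftrightarrow> (\<exists>f. bij_betw f M M' \<and>
     (\<forall>v\<in>M. \<forall>w\<in>M. f (v + w) = f v + f w) \<and> (\<forall>a. \<forall>v\<in>M. f (act a v) = act' a (f v)))"

definition hc_block_mod :: "('k::field \<Rightarrow> 'a::ring_1 \<Rightarrow> 'a) \<Rightarrow> 'a set \<Rightarrow> ('a set \<times> 'a set) set \<Rightarrow>
    'm::ab_group_add set \<Rightarrow> ('a \<Rightarrow> 'm \<Rightarrow> 'm) \<Rightarrow> bool" where
  "hc_block_mod sc G R M act \<longleftrightarrow> amod M act \<and> block_mod sc G R M {0} act"

text \<open>Finite-dimensionality over the field of a subset S of an A-module (field acting via sc c 1).\<close>
definition fin_dim :: "('k::field \<Rightarrow> 'a::ring_1 \<Rightarrow> 'a) \<Rightarrow> ('a \<Rightarrow> 'm::ab_group_add \<Rightarrow> 'm) \<Rightarrow> 'm set \<Rightarrow> bool" where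
  "fin_dim sc act S \<longleftrightarrow> (\<exists>T. finite T \<and> T \<subseteq> S \<and> (\<forall>v\<in>S. \<exists>c. v = (\<Sum>t\<in>T. act (sc (c t) 1) t)))"

text \<open>hat Gamma_B = lim Gamma/m over m in W(B); an element is represented by a family
  x m in Gamma with x m - x m' in m' whenever m is contained in m'.\<close>
definition gamma_hat :: "'a::ring_1 set \<Rightarrow> 'a set set \<Rightarrow> ('a set \<Rightarrow> 'a) set" where
  "gamma_hat G Bk = {x. (\<forall>m\<in>Wset G Bk. x m \<in> G) \<and>
     (\<forall>m\<in>Wset G Bk. \<forall>m'\<in>Wset G Bk. m \<subseteq> m' \<longrightarrow> x m - x m' \<in> m')}"

definition two_sided_denom :: "'a::ring_1 set \<Rightarrow> 'a set \<Rightarrow> 'a set" where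
  "two_sided_denom n m = addcl ({x * a | x a. x \<in> n} \<union> {a * y | a y. y \<in> m})"

text \<open>A(B,B) = lim A/(nA + Am) over n, m in W(B).\<close>
definition a_hat :: "'a::ring_1 set \<Rightarrow> 'a set set \<Rightarrow> ('a set \<times> 'a set \<Rightarrow> 'a) set" where
  "a_hat G Bk = {y. \<forall>n\<in>Wset G Bk. \<forall>m\<in>Wset G Bk. \<forall>n'\<in>Wset G Bk. \<forall>m'\<in>Wset G Bk.
     n \<subseteq> n' \<and> m \<subseteq> m' \<longrightarrow> y (n, m) - y (n', m') \<in> two_sided_denom n' m'}"

text \<open>A(B,B) finitely generated as a left hat Gamma_B-module
  (left action: (x.y)(n,m) = x n * y(n,m)); equality in A(B,B) is componentwise modulo nA+Am.\<close>
definition a_hat_fg_left :: "'a::ring_1 set \<Rightarrow> 'a set set \<Rightarrow> bool" where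
  "a_hat_fg_left G Bk \<longleftrightarrow> (\<exists>Gs. finite Gs \<and> Gs \<subseteq> a_hat G Bk \<and>
     (\<forall>y\<in>a_hat G Bk. \<exists>c. (\<forall>g\<in>Gs. c g \<in> gamma_hat G Bk) \<and>
        (\<forall>n\<in>Wset G Bk. \<forall>m\<in>Wset G Bk. y (n, m) - (\<Sum>g\<in>Gs. c g n * g (n, m)) \<in> two_sided_denom n m)))"

text \<open>Right action: (y.x)(n,m) = y(n,m) * x m.\<close>
definition a_hat_fg_right :: "'a::ring_1 set \<Rightarrow> 'a set set \<Rightarrow> bool" where
  "a_hat_fg_right G Bk \<longleftrightarrow> (\<exists>Gs. finite Gs \<and> Gs \<subseteq> a_hat G Bk \<and>
     (\<forall>y\<in>a_hat G Bk. \<exists>c. (\<forall>g\<in>Gs. c g \<in> gamma_hat G Bk) \<and>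
        (\<forall>n\<in>Wset G Bk. \<forall>m\<in>Wset G Bk. y (n, m) - (\<Sum>g\<in>Gs. g (n, m) * c g m) \<in> two_sided_denom n m)))"

end

theory Submission
  imports Defs "HOL.Vector_Spaces"
begin

text \<open>Write Am for the left ideal of A generated by m.

  Part (ii): a nonzero v \<in> V(B) is killed by some m \<in> W(B), and a \<mapsto> a v maps the block
  (A/Am)(B) onto V(B). Since \<Gamma> is a strong Harish-Chandra block subalgebra, some n \<in> W(B)
  kills (A/Am)(B), which is therefore spanned by the image of a spanning set of A/(nA + Am).
  The latter space is finite-dimensional because A(B,B) is finitely generated over the completion
  and n has finite codimension in \<Gamma> (\<Gamma> being noetherian).

  Part (i): let m0 be the product of the finitely many ideals in B. A simple V with V(B) \<noteq> 0
  has a nonzero vector w killed by m0. Refine Am0 \<subseteq> A into a chain of left ideals each of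
  whose steps is minimal as far as B-parts are concerned; the chain is finite because the B-parts
  live in the finite-dimensional (A/Am0)(B). The step at which the annihilator of w stops
  containing the chain determines V up to isomorphism.\<close>

lemma addcl_mono: "x \<in> addcl S \<Longrightarrow> S \<subseteq> T \<Longrightarrow> x \<in> addcl T"
  by (induction rule: addcl.induct) (auto intro: addcl.intros)

lemma addcl_base: "x \<in> S \<Longrightarrow> (x::'a::monoid_add) \<in> addcl S"
  by (metis add_0_right addcl.addcl_add addcl.addcl_zero)

lemma addcl_add_closed: "x \<in> addcl S \<Longrightarrow> y \<in> addcl S \<Longrightarrow> x + y \<in> addcl S"
  by (induction rule: addcl.induct) (auto simp: add.assoc intro: addcl.intros)

lemma addcl_sum: "finite I \<Longrightarrow> (\<And>i. i \<in> I \<Longrightarrow> f i \<in> addcl S) \<Longrightarrow> sum f I \<in> addcl S"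
  by (induction rule: finite_induct) (auto intro: addcl.intros addcl_add_closed)

lemma addcl_uminus:
  "x \<in> addcl S \<Longrightarrow> (\<And>y. y \<in> S \<Longrightarrow> - y \<in> S) \<Longrightarrow> - (x::'a::ab_group_add) \<in> addcl S"
proof (induction rule: addcl.induct)
  case addcl_zero
  then show ?case by (simp add: addcl.addcl_zero)
next
  case (addcl_add x y)
  then have "- x + - y \<in> addcl S" by (intro addcl.addcl_add) auto
  then show ?case by (simp add: add.commute)
qed

lemma addcl_Un_split:
  "x \<in> addcl (S \<union> T) \<Longrightarrow> \<exists>y\<in>addcl S. \<exists>z\<in>addcl T. x = y + (z::'a::comm_monoid_add)"
proof (induction rule: addcl.induct)
  case addcl_zero
  then show ?case by (metis add_0_right addcl.addcl_zero)
next
  case (addcl_add x y)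
  then obtain a b where ab: "a \<in> addcl S" "b \<in> addcl T" "y = a + b" by blast
  show ?case
  proof (cases "x \<in> S")
    case True
    then have "x + a \<in> addcl S" using ab by (auto intro: addcl.intros)
    then show ?thesis using ab by (metis add.assoc)
  next
    case False
    then have "x + b \<in> addcl T" using addcl_add ab by (auto intro: addcl.intros)
    then show ?thesis using ab by (metis add.left_commute)
  qed
qed

lemma addcl_least: "x \<in> addcl S \<Longrightarrow> 0 \<in> T \<Longrightarrow> S \<subseteq> T \<Longrightarrow> (\<forall>a\<in>T. \<forall>b\<in>T. a + b \<in> T) \<Longrightarrow> x \<in> T"
  by (induction rule: addcl.induct) auto

section \<open>Ideals of the subalgebra and their blocks\<close>

locale block_algebra =
  fixes sc :: "'k::field \<Rightarrow> 'a::ring_1 \<Rightarrow> 'a" and G :: "'a set" and R :: "('a set \<times> 'a set) set"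
  assumes k_alg: "k_algebra sc" and subalg: "subalgebra sc G" and equiv_R: "equiv (cfs sc G) R"
begin

lemma scale_add_right: "sc c (x + y) = sc c x + sc c y"
  and scale_add_left: "sc (c + d) x = sc c x + sc d x"
  and scale_scale: "sc (c * d) x = sc c (sc d x)"
  and scale_one: "sc 1 x = x"
  and scale_mult_left: "sc c (x * y) = sc c x * y"
  using k_alg unfolding k_algebra_def by blast+

sublocale vs: vector_space sc
  by unfold_locales (auto simp: scale_add_right scale_add_left scale_scale scale_one)

lemma scale_eq_mult: "sc c x = sc c 1 * x"
  using scale_mult_left[of c 1 x] by simp

lemma G_zero: "0 \<in> G" and G_one: "1 \<in> G" and G_add: "x \<in> G \<Longrightarrow> y \<in> G \<Longrightarrow> x + y \<in> G"
  and G_mult: "x \<in> G \<Longrightarrow> y \<in> G \<Longrightarrow> x * y \<in> G" and G_scale: "x \<in> G \<Longrightarrow> sc c x \<in> G"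
  using subalg unfolding subalgebra_def by auto

lemma G_scalar: "sc c 1 \<in> G"
  using G_scale G_one by auto

lemma G_uminus: "x \<in> G \<Longrightarrow> - x \<in> G"
  using G_scale[of x "-1"] by simp

lemma G_sum: "finite I \<Longrightarrow> (\<And>i. i \<in> I \<Longrightarrow> f i \<in> G) \<Longrightarrow> sum f I \<in> G"
  by (induction rule: finite_induct) (auto simp: G_zero G_add)

lemma span_finite_sum: "finite T \<Longrightarrow> y \<in> vs.span T \<Longrightarrow> \<exists>c. y = (\<Sum>t\<in>T. sc (c t) t)"
  using vs.span_finite by auto

lemma span_mult_right: "y \<in> vs.span S \<Longrightarrow> y * f \<in> vs.span ((\<lambda>s. s * f) ` S)"
proof (induction rule: vs.span_induct_alt)
  case base
  then show ?case by (simp add: vs.span_zero)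
next
  case (step c x y)
  then have "x * f \<in> vs.span ((\<lambda>s. s * f) ` S)" by (auto intro: vs.span_base)
  then have "sc c (x * f) + y * f \<in> vs.span ((\<lambda>s. s * f) ` S)"
    using step by (auto intro: vs.span_add vs.span_scale)
  then show ?case by (simp add: distrib_right scale_mult_left)
qed

lemma tsideal_G: "tsideal G G"
  unfolding tsideal_def by (auto simp: G_zero G_add G_uminus G_mult)

lemma tsideal_subset: "tsideal G I \<Longrightarrow> I \<subseteq> G"
  and tsideal_zero: "tsideal G I \<Longrightarrow> 0 \<in> I"
  and tsideal_add: "tsideal G I \<Longrightarrow> x \<in> I \<Longrightarrow> y \<in> I \<Longrightarrow> x + y \<in> I"
  and tsideal_uminus: "tsideal G I \<Longrightarrow> x \<in> I \<Longrightarrow> - x \<in> I"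
  and tsideal_mult_left: "tsideal G I \<Longrightarrow> g \<in> G \<Longrightarrow> x \<in> I \<Longrightarrow> g * x \<in> I"
  and tsideal_mult_right: "tsideal G I \<Longrightarrow> g \<in> G \<Longrightarrow> x \<in> I \<Longrightarrow> x * g \<in> I"
  unfolding tsideal_def by auto

lemma tsideal_sum: "finite S \<Longrightarrow> tsideal G I \<Longrightarrow> (\<And>i. i \<in> S \<Longrightarrow> f i \<in> I) \<Longrightarrow> sum f S \<in> I"
  by (induction S rule: finite_induct) (auto intro: tsideal_zero tsideal_add)

lemma tsideal_left_ideal: "tsideal G X \<Longrightarrow> left_ideal G X"
  unfolding tsideal_def left_ideal_def by blast

lemma ideal_mult_mem: "a \<in> I \<Longrightarrow> b \<in> J \<Longrightarrow> a * b \<in> ideal_mult I J"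
  unfolding ideal_mult_def by (rule addcl_base) auto

lemma ideal_mult_mono: "J \<subseteq> J' \<Longrightarrow> ideal_mult I J \<subseteq> ideal_mult I J'"
  unfolding ideal_mult_def by (rule subsetI, erule addcl_mono) blast

lemma tsideal_ideal_mult:
  assumes I: "tsideal G I" and J: "tsideal G J"
  shows "tsideal G (ideal_mult I J)"
  unfolding tsideal_def
proof (intro conjI ballI)
  let ?X = "{a * b | a b. a \<in> I \<and> b \<in> J}"
  have "?X \<subseteq> G" using tsideal_subset[OF I] tsideal_subset[OF J] G_mult by blast
  then show "ideal_mult I J \<subseteq> G"
    unfolding ideal_mult_def using addcl_least[of _ ?X G] G_zero G_add by blast
  show "0 \<in> ideal_mult I J" unfolding ideal_mult_def by (rule addcl.addcl_zero)
  fix x assume x: "x \<in> ideal_mult I J"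
  show "x + y \<in> ideal_mult I J" if "y \<in> ideal_mult I J" for y
    using x that unfolding ideal_mult_def by (rule addcl_add_closed)
  have "- y \<in> ?X" if "y \<in> ?X" for y
  proof -
    obtain a b where ab: "a \<in> I" "b \<in> J" "y = a * b" using \<open>y \<in> ?X\<close> by blast
    then have "- y = (- a) * b" by simp
    then show ?thesis using ab tsideal_uminus[OF I] by blast
  qed
  then show "- x \<in> ideal_mult I J"
    using x unfolding ideal_mult_def by (intro addcl_uminus)
  fix g assume g: "g \<in> G"
  show "g * x \<in> ideal_mult I J"
    using x unfolding ideal_mult_def
  proof (induction rule: addcl.induct)
    case (addcl_add u y)
    then obtain a b where ab: "a \<in> I" "b \<in> J" "u = a * b" by blast
    then have "g * u = (g * a) * b" by (simp add: mult.assoc)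
    then have "g * u \<in> ?X" using ab tsideal_mult_left[OF I g] by blast
    then show ?case using addcl_add by (simp add: distrib_left addcl.addcl_add)
  qed (simp add: addcl.addcl_zero)
  show "x * g \<in> ideal_mult I J"
    using x unfolding ideal_mult_def
  proof (induction rule: addcl.induct)
    case (addcl_add u y)
    then obtain a b where ab: "a \<in> I" "b \<in> J" "u = a * b" by blast
    then have "u * g = a * (b * g)" by (simp add: mult.assoc)
    then have "u * g \<in> ?X" using ab tsideal_mult_right[OF J g] by blast
    then show ?case using addcl_add by (simp add: distrib_right addcl.addcl_add)
  qed (simp add: addcl.addcl_zero)
qed

lemma ideal_mult_subset_left:
  assumes "tsideal G I" "J \<subseteq> G" shows "ideal_mult I J \<subseteq> I"
proof
  fix x assume "x \<in> ideal_mult I J"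
  then show "x \<in> I"
    unfolding ideal_mult_def
    by (rule addcl_least) (use assms in \<open>auto intro: tsideal_zero tsideal_add tsideal_mult_right\<close>)
qed

lemma ideal_mult_subset_right:
  assumes "I \<subseteq> G" "tsideal G J" shows "ideal_mult I J \<subseteq> J"
proof
  fix x assume "x \<in> ideal_mult I J"
  then show "x \<in> J"
    unfolding ideal_mult_def
    by (rule addcl_least) (use assms in \<open>auto intro: tsideal_zero tsideal_add tsideal_mult_left\<close>)
qed

lemma tsideal_ideal_prod: "(\<And>I. I \<in> set ms \<Longrightarrow> tsideal G I) \<Longrightarrow> tsideal G (ideal_prod G ms)"
  by (induction ms) (auto simp: tsideal_G tsideal_ideal_mult)

lemma cfs_tsideal: "m \<in> cfs sc G \<Longrightarrow> tsideal G m"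
  unfolding cfs_def max_ideal_def by auto

lemma blocks_subset_cfs: "Bk \<in> blocks sc G R \<Longrightarrow> Bk \<subseteq> cfs sc G"
  unfolding blocks_def by (rule in_quotient_imp_subset[OF equiv_R])

lemma Wset_G: "G \<in> Wset G Bk"
  unfolding Wset_def by (auto intro!: exI[of _ "[]"])

lemma Wset_tsideal: "Bk \<subseteq> cfs sc G \<Longrightarrow> m \<in> Wset G Bk \<Longrightarrow> tsideal G m"
  unfolding Wset_def using tsideal_ideal_prod cfs_tsideal by blast

lemma ideal_prod_append_subset_left:
  "(\<And>I. I \<in> set (ms1 @ ms2) \<Longrightarrow> tsideal G I) \<Longrightarrow> ideal_prod G (ms1 @ ms2) \<subseteq> ideal_prod G ms1"
proof (induction ms1)
  case Nil
  then show ?case using tsideal_ideal_prod[of ms2] tsideal_subset by auto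
next
  case (Cons a ms1)
  then show ?case using ideal_mult_mono by simp
qed

lemma ideal_prod_append_subset_right:
  "(\<And>I. I \<in> set (ms1 @ ms2) \<Longrightarrow> tsideal G I) \<Longrightarrow> ideal_prod G (ms1 @ ms2) \<subseteq> ideal_prod G ms2"
proof (induction ms1)
  case (Cons a ms1)
  have "ideal_prod G (a # ms1 @ ms2) \<subseteq> ideal_prod G (ms1 @ ms2)"
    using Cons.prems tsideal_ideal_prod[of "ms1 @ ms2"] tsideal_subset
      ideal_mult_subset_right[of a "ideal_prod G (ms1 @ ms2)"] by simp
  then show ?case using Cons by auto
qed simp

lemma Wset_lower_bound:
  assumes "Bk \<subseteq> cfs sc G" "m1 \<in> Wset G Bk" "m2 \<in> Wset G Bk"
  shows "\<exists>m\<in>Wset G Bk. m \<subseteq> m1 \<and> m \<subseteq> m2"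
proof -
  obtain ms1 ms2 where ms: "m1 = ideal_prod G ms1" "m2 = ideal_prod G ms2" "set (ms1 @ ms2) \<subseteq> Bk"
    using assms(2,3) unfolding Wset_def by auto
  then have "ideal_prod G (ms1 @ ms2) \<in> Wset G Bk"
    unfolding Wset_def by blast
  moreover have "\<And>I. I \<in> set (ms1 @ ms2) \<Longrightarrow> tsideal G I"
    using ms(3) assms(1) cfs_tsideal by blast
  then have "ideal_prod G (ms1 @ ms2) \<subseteq> m1" "ideal_prod G (ms1 @ ms2) \<subseteq> m2"
    unfolding ms(1,2)
    using ideal_prod_append_subset_left ideal_prod_append_subset_right by blast+
  ultimately show ?thesis by blast
qed

lemma ideal_prod_subset_factor:
  "p \<in> set ms \<Longrightarrow> (\<And>I. I \<in> set ms \<Longrightarrow> tsideal G I) \<Longrightarrow> ideal_prod G ms \<subseteq> p"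
proof (induction ms)
  case (Cons a ms)
  have "tsideal G (ideal_prod G ms)" using Cons.prems tsideal_ideal_prod by auto
  show ?case
  proof (cases "p = a")
    case True
    then show ?thesis
      using Cons.prems \<open>tsideal G (ideal_prod G ms)\<close> tsideal_subset
        ideal_mult_subset_left[of a "ideal_prod G ms"] by simp
  next
    case False
    then have "ideal_prod G ms \<subseteq> p" using Cons by simp
    then show ?thesis
      using Cons.prems \<open>tsideal G (ideal_prod G ms)\<close> tsideal_subset
        ideal_mult_subset_right[of a "ideal_prod G ms"] by simp
  qed
qed simp

lemma tsideal_plus:
  assumes I: "tsideal G I" and J: "tsideal G J"
  shows "tsideal G {x + y | x y. x \<in> I \<and> y \<in> J}" (is "tsideal G ?S")
  unfolding tsideal_def
proof (intro conjI ballI)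
  show "?S \<subseteq> G" using tsideal_subset[OF I] tsideal_subset[OF J] G_add by blast
  show "0 \<in> ?S" using tsideal_zero[OF I] tsideal_zero[OF J] by force
  fix s assume "s \<in> ?S"
  then obtain a b where ab: "a \<in> I" "b \<in> J" "s = a + b" by blast
  show "s + t \<in> ?S" if "t \<in> ?S" for t
  proof -
    obtain c d where cd: "c \<in> I" "d \<in> J" "t = c + d" using \<open>t \<in> ?S\<close> by blast
    have "s + t = (a + c) + (b + d)" using ab cd by (simp add: algebra_simps)
    then show ?thesis using ab cd tsideal_add[OF I] tsideal_add[OF J] by blast
  qed
  have "- s = (- a) + (- b)" using ab by simp
  then show "- s \<in> ?S" using ab tsideal_uminus[OF I] tsideal_uminus[OF J] by blast
  fix g assume g: "g \<in> G"
  have "g * s = g * a + g * b" using ab by (simp add: distrib_left)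
  then show "g * s \<in> ?S" using ab g tsideal_mult_left[OF I] tsideal_mult_left[OF J] by blast
  have "s * g = a * g + b * g" using ab by (simp add: distrib_right)
  then show "s * g \<in> ?S" using ab g tsideal_mult_right[OF I] tsideal_mult_right[OF J] by blast
qed

definition comaximal :: "'a set \<Rightarrow> 'a set \<Rightarrow> bool" where
  "comaximal I J \<longleftrightarrow> (\<exists>p\<in>I. \<exists>q\<in>J. p + q = 1)"

lemma comaximal_sym: "comaximal I J \<Longrightarrow> comaximal J I"
  unfolding comaximal_def by (metis add.commute)

lemma comaximal_G: "tsideal G I \<Longrightarrow> comaximal I G"
  unfolding comaximal_def using tsideal_zero G_one by force

lemma cfs_comaximal:
  assumes p: "p \<in> cfs sc G" and q: "q \<in> cfs sc G" and "p \<noteq> q"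
  shows "comaximal p q"
proof -
  let ?S = "{x + y | x y. x \<in> p \<and> y \<in> q}"
  have tp: "tsideal G p" and tq: "tsideal G q" using p q cfs_tsideal by auto
  have max_p: "\<And>J. tsideal G J \<Longrightarrow> p \<subseteq> J \<Longrightarrow> J \<noteq> G \<Longrightarrow> J = p"
    and max_q: "\<And>J. tsideal G J \<Longrightarrow> q \<subseteq> J \<Longrightarrow> J \<noteq> G \<Longrightarrow> J = q"
    and "p \<noteq> G"
    using p q unfolding cfs_def max_ideal_def by auto
  have pS: "p \<subseteq> ?S" using tsideal_zero[OF tq] by force
  have qS: "q \<subseteq> ?S" using tsideal_zero[OF tp] by force
  have "?S = G"
  proof (rule ccontr)
    assume "?S \<noteq> G"
    then have "?S = p" using max_p[OF tsideal_plus[OF tp tq] pS] by simp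
    then have "q = p" using max_q[OF tp] qS \<open>p \<noteq> G\<close> by simp
    with \<open>p \<noteq> q\<close> show False by simp
  qed
  then have "1 \<in> ?S" using G_one by simp
  then obtain x y where "x \<in> p" "y \<in> q" "1 = x + y" by blast
  then show ?thesis unfolding comaximal_def by auto
qed

lemma comaximal_ideal_mult:
  assumes I: "tsideal G I" and J: "J \<subseteq> G"
    and IJ: "comaximal I J" and IJ': "comaximal I J'"
  shows "comaximal I (ideal_mult J J')"
proof -
  obtain i j where ij: "i \<in> I" "j \<in> J" "i + j = 1" using IJ unfolding comaximal_def by auto
  obtain i' j' where ij': "i' \<in> I" "j' \<in> J'" "i' + j' = 1" using IJ' unfolding comaximal_def by auto
  have "(i + j * i') + j * j' = i + j * (i' + j')" by (simp add: distrib_left add.assoc)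
  also have "\<dots> = 1" using ij(3) ij'(3) by simp
  finally have "(i + j * i') + j * j' = 1" .
  moreover have "i + j * i' \<in> I"
    using ij ij' J tsideal_add[OF I] tsideal_mult_left[OF I] by blast
  moreover have "j * j' \<in> ideal_mult J J'" using ij ij' ideal_mult_mem by blast
  ultimately show ?thesis unfolding comaximal_def by blast
qed

lemma comaximal_cfs_ideal_prod:
  assumes "p \<in> cfs sc G" "set ms \<subseteq> cfs sc G" "p \<notin> set ms"
  shows "comaximal p (ideal_prod G ms)"
  using assms(2,3)
proof (induction ms)
  case Nil
  then show ?case using comaximal_G cfs_tsideal assms(1) by simp
next
  case (Cons q ms)
  then have "comaximal p q" "q \<subseteq> G" "comaximal p (ideal_prod G ms)"
    using assms(1) cfs_comaximal cfs_tsideal tsideal_subset by auto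
  then show ?case
    using comaximal_ideal_mult[OF cfs_tsideal[OF assms(1)]] by simp
qed

lemma Wset_comaximal:
  assumes B1: "B1 \<in> blocks sc G R" and B2: "B2 \<in> blocks sc G R" and "B1 \<noteq> B2"
    and m1: "m1 \<in> Wset G B1" and m2: "m2 \<in> Wset G B2"
  shows "comaximal m1 m2"
proof -
  have sub1: "B1 \<subseteq> cfs sc G" and sub2: "B2 \<subseteq> cfs sc G"
    using B1 B2 blocks_subset_cfs by auto
  have disj: "B1 \<inter> B2 = {}"
    using B1 B2 \<open>B1 \<noteq> B2\<close> equiv_R unfolding blocks_def by (meson quotient_disj)
  obtain ms1 ms2 where ms: "m1 = ideal_prod G ms1" "m2 = ideal_prod G ms2"
    "set ms1 \<subseteq> B1" "set ms2 \<subseteq> B2"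
    using m1 m2 unfolding Wset_def by auto
  have tm2: "tsideal G m2" using Wset_tsideal[OF sub2 m2] .
  have "comaximal m2 (ideal_prod G ms)" if "set ms \<subseteq> B1" for ms
    using that
  proof (induction ms)
    case Nil
    then show ?case using comaximal_G[OF tm2] by simp
  next
    case (Cons p ms)
    have p: "p \<in> cfs sc G" "p \<notin> set ms2" using Cons.prems ms(4) disj sub1 by auto
    then have "comaximal m2 p"
      using ms(2,4) sub2 comaximal_cfs_ideal_prod comaximal_sym by blast
    moreover have "p \<subseteq> G" using p(1) cfs_tsideal tsideal_subset by blast
    ultimately show ?case
      using Cons comaximal_ideal_mult[OF tm2] by simp
  qed
  then show ?thesis using ms(1,3) comaximal_sym by blast
qed

end

section \<open>Finite codimension of the ideals in W(B)\<close>

context block_algebra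
begin

definition left_gen :: "'a set \<Rightarrow> 'a set" where
  "left_gen F = {\<Sum>f\<in>F. c f * f | c. \<forall>f\<in>F. c f \<in> G}"

lemma left_genI: "\<forall>f\<in>F. c f \<in> G \<Longrightarrow> x = (\<Sum>f\<in>F. c f * f) \<Longrightarrow> x \<in> left_gen F"
  unfolding left_gen_def by blast

lemma left_gen_left_ideal:
  assumes F: "finite F" "F \<subseteq> G"
  shows "left_ideal G (left_gen F)"
  unfolding left_ideal_def
proof (intro conjI ballI)
  show "left_gen F \<subseteq> G"
    unfolding left_gen_def using F by (auto intro!: G_sum G_mult)
  show "0 \<in> left_gen F"
    unfolding left_gen_def using G_zero by (auto intro!: exI[of _ "\<lambda>_. 0"])
  fix x assume "x \<in> left_gen F"
  then obtain c where c: "\<forall>f\<in>F. c f \<in> G" "x = (\<Sum>f\<in>F. c f * f)"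
    unfolding left_gen_def by blast
  show "x + y \<in> left_gen F" if y: "y \<in> left_gen F" for y
  proof -
    obtain d where d: "\<forall>f\<in>F. d f \<in> G" "y = (\<Sum>f\<in>F. d f * f)"
      using y unfolding left_gen_def by blast
    have "x + y = (\<Sum>f\<in>F. (c f + d f) * f)" using c d by (simp add: distrib_right sum.distrib)
    then show ?thesis using c d G_add by (intro left_genI[of F "\<lambda>f. c f + d f"]) auto
  qed
  have "- x = (\<Sum>f\<in>F. (- c f) * f)" using c by (simp add: sum_negf)
  then show "- x \<in> left_gen F" using c G_uminus by (intro left_genI[of F "\<lambda>f. - c f"]) auto
  fix g assume "g \<in> G"
  have "g * x = (\<Sum>f\<in>F. (g * c f) * f)" using c by (simp add: sum_distrib_left mult.assoc)
  then show "g * x \<in> left_gen F"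
    using c \<open>g \<in> G\<close> G_mult by (intro left_genI[of F "\<lambda>f. g * c f"]) auto
qed

lemma left_gen_mono:
  assumes "finite F'" "F \<subseteq> F'"
  shows "left_gen F \<subseteq> left_gen F'"
proof
  fix x assume "x \<in> left_gen F"
  then obtain c where c: "\<forall>f\<in>F. c f \<in> G" "x = (\<Sum>f\<in>F. c f * f)"
    unfolding left_gen_def by blast
  let ?d = "\<lambda>f. if f \<in> F then c f else 0"
  have "x = (\<Sum>f\<in>F'. ?d f * f)"
    unfolding c(2) by (rule sum.mono_neutral_cong_right[OF assms, symmetric]) auto
  moreover have "\<forall>f\<in>F'. ?d f \<in> G" using c G_zero by auto
  ultimately show "x \<in> left_gen F'" by (intro left_genI)
qed

lemma left_gen_base:
  assumes "finite F" "f \<in> F"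
  shows "f \<in> left_gen F"
proof -
  let ?d = "\<lambda>f'. if f' = f then 1 else 0"
  have "(\<Sum>f'\<in>F. ?d f' * f') = (\<Sum>f'\<in>F. if f' = f then f' else 0)"
    by (rule sum.cong) auto
  also have "\<dots> = f" using assms by simp
  finally have "f = (\<Sum>f'\<in>F. ?d f' * f')" ..
  moreover have "\<forall>f'\<in>F. ?d f' \<in> G" using G_zero G_one by auto
  ultimately show ?thesis by (intro left_genI)
qed

text \<open>If X were not finitely generated, adding one element outside the current left ideal at
  a time would produce a strictly ascending chain.\<close>

lemma noetherian_left_ideal_fg:
  assumes noeth: "noetherian G" and X: "left_ideal G X"
  shows "\<exists>F. finite F \<and> F \<subseteq> X \<and> X \<subseteq> left_gen F"
proof (rule ccontr)
  assume not_fg: "\<not> ?thesis"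
  have XG: "X \<subseteq> G" using X unfolding left_ideal_def by blast
  define next_gen where "next_gen F = (SOME x. x \<in> X \<and> x \<notin> left_gen F)" for F
  have next_gen: "next_gen F \<in> X \<and> next_gen F \<notin> left_gen F" if "finite F" "F \<subseteq> X" for F
    unfolding next_gen_def by (rule someI_ex) (use not_fg that in blast)
  define S where "S k = ((\<lambda>F. insert (next_gen F) F) ^^ k) {}" for k
  have S_Suc: "S (Suc k) = insert (next_gen (S k)) (S k)" for k
    unfolding S_def by simp
  have S: "finite (S k) \<and> S k \<subseteq> X" for k
    by (induction k) (simp_all add: S_def next_gen)
  have chain: "\<forall>k. left_ideal G (left_gen (S k)) \<and> left_gen (S k) \<subseteq> left_gen (S (Suc k))"
  proof
    fix k
    have "finite (S (Suc k))" "S k \<subseteq> S (Suc k)" using S S_Suc by auto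
    then show "left_ideal G (left_gen (S k)) \<and> left_gen (S k) \<subseteq> left_gen (S (Suc k))"
      using left_gen_left_ideal[of "S k"] left_gen_mono S[of k] XG by blast
  qed
  have "\<forall>I. (\<forall>n. left_ideal G (I n) \<and> I n \<subseteq> I (Suc n)) \<longrightarrow> (\<exists>N. \<forall>n\<ge>N. I n = I N)"
    using noeth unfolding noetherian_def by (rule conjunct1)
  then obtain n where n: "\<forall>k\<ge>n. left_gen (S k) = left_gen (S n)"
    using chain by (meson spec)
  have "left_gen (S (Suc n)) = left_gen (S n)" using n[rule_format, of "Suc n"] by linarith
  moreover have "next_gen (S n) \<in> left_gen (S (Suc n))"
    using S[of "Suc n"] S_Suc left_gen_base by simp
  ultimately show False using next_gen S by blast
qed

lemma fin_codim_span:
  "fin_codim sc G m \<longleftrightarrow> (\<exists>S. finite S \<and> S \<subseteq> G \<and> (\<forall>x\<in>G. \<exists>y\<in>vs.span S. x - y \<in> m))"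
proof -
  have "(\<exists>c. x - (\<Sum>s\<in>S. sc (c s) s) \<in> m) \<longleftrightarrow> (\<exists>y\<in>vs.span S. x - y \<in> m)"
    if "finite S" for S x
  proof
    assume "\<exists>c. x - (\<Sum>s\<in>S. sc (c s) s) \<in> m"
    moreover have "(\<Sum>s\<in>S. sc (c s) s) \<in> vs.span S" for c
      by (intro vs.span_sum vs.span_scale vs.span_base)
    ultimately show "\<exists>y\<in>vs.span S. x - y \<in> m" by blast
  next
    assume "\<exists>y\<in>vs.span S. x - y \<in> m"
    then show "\<exists>c. x - (\<Sum>s\<in>S. sc (c s) s) \<in> m"
      using span_finite_sum[OF that] by blast
  qed
  then show ?thesis unfolding fin_codim_def by auto
qed

text \<open>If F generates J as a left ideal and S spans G modulo I, then J is spanned modulo IJ by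
  the products s f.\<close>

lemma fin_codim_ideal_mult:
  assumes noeth: "noetherian G" and I: "tsideal G I" "fin_codim sc G I"
    and J: "tsideal G J" "fin_codim sc G J"
  shows "fin_codim sc G (ideal_mult I J)"
proof -
  obtain SJ where SJ: "finite SJ" "SJ \<subseteq> G" "\<forall>x\<in>G. \<exists>y\<in>vs.span SJ. x - y \<in> J"
    using J(2) unfolding fin_codim_span by blast
  obtain SI where SI: "finite SI" "SI \<subseteq> G" "\<forall>x\<in>G. \<exists>y\<in>vs.span SI. x - y \<in> I"
    using I(2) unfolding fin_codim_span by blast
  obtain F where F: "finite F" "F \<subseteq> J" "J \<subseteq> left_gen F"
    using noetherian_left_ideal_fg[OF noeth tsideal_left_ideal[OF J(1)]] by blast
  have FG: "F \<subseteq> G" using F(2) tsideal_subset[OF J(1)] by blast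
  let ?T = "SJ \<union> (\<Union>f\<in>F. (\<lambda>s. s * f) ` SI)"
  have "finite ?T" using SJ F SI by auto
  moreover have "?T \<subseteq> G" using SJ(2) SI(2) FG by (blast intro: G_mult)
  moreover have "\<exists>y\<in>vs.span ?T. x - y \<in> ideal_mult I J" if "x \<in> G" for x
  proof -
    obtain y where y: "y \<in> vs.span SJ" "x - y \<in> J" using SJ(3) \<open>x \<in> G\<close> by blast
    then have "x - y \<in> left_gen F" using F(3) by blast
    then obtain e where e: "\<forall>f\<in>F. e f \<in> G" "x - y = (\<Sum>f\<in>F. e f * f)"
      unfolding left_gen_def by blast
    have "\<forall>f\<in>F. \<exists>y. y \<in> vs.span SI \<and> e f - y \<in> I" using SI(3) e(1) by blast
    from bchoice[OF this] obtain d where d: "\<forall>f\<in>F. d f \<in> vs.span SI \<and> e f - d f \<in> I" ..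
    have "(\<Sum>f\<in>F. (e f - d f) * f) \<in> ideal_mult I J"
    proof (rule tsideal_sum[OF F(1) tsideal_ideal_mult[OF I(1) J(1)]])
      fix f assume "f \<in> F"
      then show "(e f - d f) * f \<in> ideal_mult I J" using d F(2) ideal_mult_mem by blast
    qed
    moreover have "(\<Sum>f\<in>F. (e f - d f) * f) = (\<Sum>f\<in>F. e f * f) - (\<Sum>f\<in>F. d f * f)"
      by (simp add: left_diff_distrib sum_subtractf)
    moreover have "(\<Sum>f\<in>F. e f * f) - (\<Sum>f\<in>F. d f * f) = x - (y + (\<Sum>f\<in>F. d f * f))"
      using e(2) by (simp add: algebra_simps)
    moreover have "(\<Sum>f\<in>F. d f * f) \<in> vs.span ?T"
    proof (rule vs.span_sum)
      fix f assume "f \<in> F"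
      then have "(\<lambda>s. s * f) ` SI \<subseteq> ?T" by blast
      then show "d f * f \<in> vs.span ?T"
        using span_mult_right[of "d f" SI f] d \<open>f \<in> F\<close> vs.span_mono by blast
    qed
    then have "y + (\<Sum>f\<in>F. d f * f) \<in> vs.span ?T"
      using y(1) vs.span_mono[of SJ ?T] vs.span_add by blast
    ultimately show ?thesis by (intro bexI[of _ "y + (\<Sum>f\<in>F. d f * f)"]) simp_all
  qed
  ultimately show ?thesis unfolding fin_codim_span by (intro exI[of _ ?T]) blast
qed

lemma fin_codim_ideal_prod:
  assumes noeth: "noetherian G"
  shows "set ms \<subseteq> cfs sc G \<Longrightarrow> fin_codim sc G (ideal_prod G ms)"
proof (induction ms)
  case Nil
  show ?case unfolding fin_codim_def by (intro exI[of _ "{}"]) simp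
next
  case (Cons p ms)
  then have "tsideal G p" "fin_codim sc G p" "tsideal G (ideal_prod G ms)"
    using cfs_tsideal tsideal_ideal_prod unfolding cfs_def by auto
  then show ?case using fin_codim_ideal_mult[OF noeth] Cons by simp
qed

end

lemma subset_chain_cut:
  fixes c :: "nat \<Rightarrow> 'a set"
  assumes "c 0 \<subseteq> K" and "\<not> c r \<subseteq> K"
  shows "\<exists>j<r. c j \<subseteq> K \<and> \<not> c (Suc j) \<subseteq> K"
  using assms(2)
proof (induction r)
  case 0
  then show ?case using assms(1) by simp
next
  case (Suc r)
  show ?case
  proof (cases "c r \<subseteq> K")
    case True
    then show ?thesis using Suc.prems by (intro exI[of _ r]) auto
  next
    case False
    then obtain j where "j < r" "c j \<subseteq> K" "\<not> c (Suc j) \<subseteq> K" using Suc.IH by blast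
    then show ?thesis by (intro exI[of _ j]) auto
  qed
qed

locale amodule =
  fixes M :: "'m::ab_group_add set" and act :: "'a::ring_1 \<Rightarrow> 'm \<Rightarrow> 'm"
  assumes amod: "amod M act"
begin

lemma M_zero: "0 \<in> M" and M_add: "v \<in> M \<Longrightarrow> w \<in> M \<Longrightarrow> v + w \<in> M"
  and M_uminus: "v \<in> M \<Longrightarrow> - v \<in> M" and M_act: "v \<in> M \<Longrightarrow> act a v \<in> M"
  and act_add_right: "v \<in> M \<Longrightarrow> w \<in> M \<Longrightarrow> act a (v + w) = act a v + act a w"
  and act_add_left: "v \<in> M \<Longrightarrow> act (a + b) v = act a v + act b v"
  and act_mult: "v \<in> M \<Longrightarrow> act (a * b) v = act a (act b v)"
  and act_one: "v \<in> M \<Longrightarrow> act 1 v = v"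
  using amod unfolding amod_def by auto

lemma act_zero_right: "act a 0 = 0"
  using act_add_right[OF M_zero M_zero, of a] by simp

lemma act_zero_left: "v \<in> M \<Longrightarrow> act 0 v = 0"
  using act_add_left[of v 0 0] by simp

lemma act_uminus_left: "v \<in> M \<Longrightarrow> act (- a) v = - act a v"
  using act_add_left[of v a "- a"] act_zero_left by (simp add: add_eq_0_iff)

lemma act_uminus_right: "v \<in> M \<Longrightarrow> act a (- v) = - act a v"
  using act_add_right[of v "- v" a] act_zero_right M_uminus by (simp add: add_eq_0_iff)

lemma act_diff_left: "v \<in> M \<Longrightarrow> act (a - b) v = act a v - act b v"
  using act_add_left[of v a "- b"] act_uminus_left by simp

lemma act_diff_right: "v \<in> M \<Longrightarrow> w \<in> M \<Longrightarrow> act a (v - w) = act a v - act a w"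
  using act_add_right[of v "- w" a] act_uminus_right M_uminus by simp

lemma act_sum_left: "finite I \<Longrightarrow> v \<in> M \<Longrightarrow> act (sum f I) v = (\<Sum>i\<in>I. act (f i) v)"
  by (induction rule: finite_induct) (auto simp: act_zero_left act_add_left)

lemma simple_cyclic:
  assumes simple: "simple_amod M act" and v: "v \<in> M" "v \<noteq> 0" and u: "u \<in> M"
  shows "\<exists>a. u = act a v"
proof -
  let ?S = "range (\<lambda>a. act a v)"
  have sub: "\<And>N. N \<subseteq> M \<Longrightarrow> 0 \<in> N \<Longrightarrow> \<forall>x\<in>N. \<forall>y\<in>N. x + y \<in> N \<Longrightarrow> \<forall>x\<in>N. - x \<in> N
      \<Longrightarrow> \<forall>a. \<forall>x\<in>N. act a x \<in> N \<Longrightarrow> N = {0} \<or> N = M"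
    using simple unfolding simple_amod_def by blast
  have "?S = {0} \<or> ?S = M"
  proof (rule sub)
    show "?S \<subseteq> M" using M_act[OF v(1)] by blast
    show "0 \<in> ?S" using act_zero_left[OF v(1)] by (metis rangeI)
    show "\<forall>x\<in>?S. \<forall>y\<in>?S. x + y \<in> ?S" using act_add_left[OF v(1), symmetric] by auto
    show "\<forall>x\<in>?S. - x \<in> ?S" using act_uminus_left[OF v(1), symmetric] by auto
    show "\<forall>a. \<forall>x\<in>?S. act a x \<in> ?S" using act_mult[OF v(1), symmetric] by auto
  qed
  moreover have "v \<in> ?S" using act_one[OF v(1)] by (metis rangeI)
  ultimately show ?thesis using v(2) u by blast
qed

end

lemma cyclic_amod_iso:
  assumes am1: "amod M1 act1" and am2: "amod M2 act2" and v1: "v1 \<in> M1" and v2: "v2 \<in> M2"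
    and gen1: "\<forall>u\<in>M1. \<exists>a. u = act1 a v1" and gen2: "\<forall>u\<in>M2. \<exists>a. u = act2 a v2"
    and ann: "\<forall>a. act1 a v1 = 0 \<longleftrightarrow> act2 a v2 = 0"
  shows "amod_iso M1 act1 M2 act2"
proof -
  interpret A1: amodule M1 act1 by (rule amodule.intro[OF am1])
  interpret A2: amodule M2 act2 by (rule amodule.intro[OF am2])
  have same: "act1 a v1 = act1 b v1 \<longleftrightarrow> act2 a v2 = act2 b v2" for a b
  proof -
    have "act1 a v1 = act1 b v1 \<longleftrightarrow> act1 (a - b) v1 = 0" using A1.act_diff_left[OF v1] by simp
    also have "\<dots> \<longleftrightarrow> act2 (a - b) v2 = 0" using ann by blast
    also have "\<dots> \<longleftrightarrow> act2 a v2 = act2 b v2" using A2.act_diff_left[OF v2] by simp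
    finally show ?thesis .
  qed
  define f where "f u = act2 (SOME a. u = act1 a v1) v2" for u
  have f: "f (act1 a v1) = act2 a v2" for a
  proof -
    have "act1 a v1 = act1 (SOME a'. act1 a v1 = act1 a' v1) v1" by (rule someI) (rule refl)
    then show ?thesis unfolding f_def using same by simp
  qed
  have "inj_on f M1"
  proof (rule inj_onI)
    fix u u' assume "u \<in> M1" "u' \<in> M1" "f u = f u'"
    moreover obtain a b where "u = act1 a v1" "u' = act1 b v1" using gen1 \<open>u \<in> M1\<close> \<open>u' \<in> M1\<close> by blast
    ultimately show "u = u'" using f same by simp
  qed
  moreover have "f ` M1 = M2"
  proof
    show "f ` M1 \<subseteq> M2"
    proof
      fix y assume "y \<in> f ` M1"
      then obtain u a where "y = f u" "u = act1 a v1" using gen1 by blast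
      then show "y \<in> M2" using f A2.M_act[OF v2] by simp
    qed
    show "M2 \<subseteq> f ` M1"
    proof
      fix y assume "y \<in> M2"
      then obtain a where "y = f (act1 a v1)" using gen2 f by auto
      then show "y \<in> f ` M1" using A1.M_act[OF v1] by blast
    qed
  qed
  moreover have "f (u + u') = f u + f u'" if u: "u \<in> M1" "u' \<in> M1" for u u'
  proof -
    obtain a b where "u = act1 a v1" "u' = act1 b v1" using gen1 u by blast
    moreover from this have "u + u' = act1 (a + b) v1" using A1.act_add_left[OF v1] by simp
    ultimately show ?thesis using f A2.act_add_left[OF v2] by simp
  qed
  moreover have "f (act1 c u) = act2 c (f u)" if u: "u \<in> M1" for c u
  proof -
    obtain a where "u = act1 a v1" using gen1 u by blast
    moreover from this have "act1 c u = act1 (c * a) v1" using A1.act_mult[OF v1] by simp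
    ultimately show ?thesis using f A2.act_mult[OF v2] by simp
  qed
  ultimately show ?thesis unfolding amod_iso_def bij_betw_def by (intro exI[of _ f]) blast
qed

lemma simple_amod_iso_same_ann:
  assumes simple1: "simple_amod M1 act1" and simple2: "simple_amod M2 act2"
    and w1: "w1 \<in> M1" and w2: "w2 \<in> M2" and x: "act1 x w1 \<noteq> 0"
    and ann: "\<forall>a. act1 (a * x) w1 = 0 \<longleftrightarrow> act2 (a * x) w2 = 0"
  shows "amod_iso M1 act1 M2 act2"
proof -
  have am1: "amod M1 act1" and am2: "amod M2 act2"
    using simple1 simple2 unfolding simple_amod_def by blast+
  interpret A1: amodule M1 act1 by (rule amodule.intro[OF am1])
  interpret A2: amodule M2 act2 by (rule amodule.intro[OF am2])
  have ann': "act1 a (act1 x w1) = 0 \<longleftrightarrow> act2 a (act2 x w2) = 0" for a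
    using ann A1.act_mult[OF w1] A2.act_mult[OF w2] by simp
  then have "act2 x w2 \<noteq> 0" using x A1.act_one[OF A1.M_act[OF w1]] A2.act_one[OF A2.M_act[OF w2]] by metis
  then show ?thesis
    using cyclic_amod_iso[OF am1 am2 A1.M_act[OF w1] A2.M_act[OF w2]] ann'
      A1.simple_cyclic[OF simple1 A1.M_act[OF w1] x] A2.simple_cyclic[OF simple2 A2.M_act[OF w2]]
    by blast
qed

locale quotient_module = block_algebra sc G R + amodule M act
  for sc :: "'k::field \<Rightarrow> 'a::ring_1 \<Rightarrow> 'a" and G R
    and M :: "'m::ab_group_add set" and act :: "'a \<Rightarrow> 'm \<Rightarrow> 'm" +
  fixes N :: "'m set"
  assumes N_zero: "0 \<in> N"
    and N_add: "x \<in> N \<Longrightarrow> y \<in> N \<Longrightarrow> x + y \<in> N" and N_uminus: "x \<in> N \<Longrightarrow> - x \<in> N"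
    and N_act: "x \<in> N \<Longrightarrow> act a x \<in> N"
begin

lemma act_lincomb_image:
  assumes "finite T" "\<And>t. t \<in> T \<Longrightarrow> h t \<in> M"
  shows "\<exists>c'. (\<Sum>t\<in>T. act (sc (c t) 1) (h t)) = (\<Sum>s\<in>h ` T. act (sc (c' s) 1) s)"
proof -
  let ?c' = "\<lambda>s. \<Sum>t\<in>{t \<in> T. h t = s}. c t"
  have "(\<Sum>t\<in>T. act (sc (c t) 1) (h t)) = (\<Sum>s\<in>h ` T. \<Sum>t\<in>{t \<in> T. h t = s}. act (sc (c t) 1) s)"
    by (subst sum.image_gen[OF assms(1)]) (auto intro!: sum.cong)
  also have "\<dots> = (\<Sum>s\<in>h ` T. act (sc (?c' s) 1) s)"
    using assms by (auto intro!: sum.cong simp: vs.scale_sum_left act_sum_left)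
  finally show ?thesis by (rule exI[where x = ?c'])
qed

abbreviation V :: "'a set set \<Rightarrow> 'm set" where
  "V Bk \<equiv> vsub G M N act Bk"

lemma vsub_subset: "V Bk \<subseteq> M"
  unfolding vsub_def by auto

lemma vsub_zero: "0 \<in> V Bk"
  unfolding vsub_def using M_zero N_zero act_zero_right Wset_G by auto

lemma vsub_add:
  assumes "Bk \<subseteq> cfs sc G" "v \<in> V Bk" "w \<in> V Bk"
  shows "v + w \<in> V Bk"
proof -
  obtain m1 m2 where m: "m1 \<in> Wset G Bk" "m2 \<in> Wset G Bk"
    "\<forall>x\<in>m1. act x v \<in> N" "\<forall>x\<in>m2. act x w \<in> N" and vw: "v \<in> M" "w \<in> M"
    using assms unfolding vsub_def by auto
  obtain m where "m \<in> Wset G Bk" "m \<subseteq> m1" "m \<subseteq> m2"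
    using Wset_lower_bound[OF assms(1) m(1,2)] by blast
  moreover have "act x (v + w) \<in> N" if "x \<in> m" for x
  proof -
    have "act x v \<in> N" "act x w \<in> N" using that calculation(2,3) m(3,4) by auto
    then show ?thesis using act_add_right[OF vw] N_add by simp
  qed
  ultimately show ?thesis unfolding vsub_def using M_add[OF vw] by blast
qed

lemma vsub_uminus:
  assumes "v \<in> V Bk" shows "- v \<in> V Bk"
proof -
  obtain m where m: "m \<in> Wset G Bk" "\<forall>x\<in>m. act x v \<in> N" and v: "v \<in> M"
    using assms unfolding vsub_def by auto
  then have "\<forall>x\<in>m. act x (- v) \<in> N" using act_uminus_right N_uminus by simp
  then show ?thesis unfolding vsub_def using m(1) M_uminus[OF v] by blast
qed

lemma vsub_diff: "Bk \<subseteq> cfs sc G \<Longrightarrow> v \<in> V Bk \<Longrightarrow> w \<in> V Bk \<Longrightarrow> v - w \<in> V Bk"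
  using vsub_add vsub_uminus by (metis diff_conv_add_uminus)

lemma vsub_act_G:
  assumes "Bk \<subseteq> cfs sc G" "g \<in> G" "v \<in> V Bk"
  shows "act g v \<in> V Bk"
proof -
  obtain m where m: "m \<in> Wset G Bk" "\<forall>x\<in>m. act x v \<in> N" and v: "v \<in> M"
    using assms unfolding vsub_def by auto
  have "act x (act g v) \<in> N" if "x \<in> m" for x
    using m(2) tsideal_mult_right[OF Wset_tsideal[OF assms(1) m(1)] assms(2) that] act_mult[OF v]
    by auto
  then show ?thesis unfolding vsub_def using m(1) M_act[OF v] by blast
qed

definition others :: "'a set set \<Rightarrow> 'm set" where
  "others B = addcl (\<Union>{V Bk | Bk. Bk \<in> blocks sc G R \<and> Bk \<noteq> B})"

lemma others_subset: "others B \<subseteq> M"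
  unfolding others_def using vsub_subset M_zero M_add by (auto elim!: addcl_least)

lemma others_zero: "0 \<in> others B"
  unfolding others_def by (rule addcl.addcl_zero)

lemma others_add: "x \<in> others B \<Longrightarrow> y \<in> others B \<Longrightarrow> x + y \<in> others B"
  unfolding others_def by (rule addcl_add_closed)

lemma others_base: "Bk \<in> blocks sc G R \<Longrightarrow> Bk \<noteq> B \<Longrightarrow> x \<in> V Bk \<Longrightarrow> x \<in> others B"
  unfolding others_def by (rule addcl_base) auto

lemma others_sum: "finite I \<Longrightarrow> (\<And>i. i \<in> I \<Longrightarrow> f i \<in> others B) \<Longrightarrow> sum f I \<in> others B"
  unfolding others_def by (rule addcl_sum)

lemma others_act_G:
  assumes "g \<in> G" "x \<in> others B"
  shows "act g x \<in> others B"
  using assms(2) unfolding others_def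
proof (induction rule: addcl.induct)
  case addcl_zero
  then show ?case by (simp add: act_zero_right addcl.addcl_zero)
next
  case (addcl_add x y)
  then obtain Bk where Bk: "Bk \<in> blocks sc G R" "Bk \<noteq> B" "x \<in> V Bk" by auto
  have "x \<in> M" "y \<in> M" using Bk(3) addcl_add(2) vsub_subset others_subset
    unfolding others_def by auto
  moreover have "act g x \<in> others B"
    using vsub_act_G[OF blocks_subset_cfs[OF Bk(1)] assms(1) Bk(3)] others_base Bk by blast
  ultimately show ?case
    using addcl_add(3) act_add_right others_add unfolding others_def by auto
qed

text \<open>This is where comaximality of the ideals of different blocks enters.\<close>

lemma others_killed:
  assumes B: "B \<in> blocks sc G R" and m: "m \<in> Wset G B" and ob: "ob \<in> others B"
  shows "\<exists>g\<in>G. 1 - g \<in> m \<and> act g ob \<in> N"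
  using ob unfolding others_def
proof (induction rule: addcl.induct)
  case addcl_zero
  have "1 - 1 \<in> m" using tsideal_zero[OF Wset_tsideal[OF blocks_subset_cfs[OF B] m]] by simp
  then show ?case using act_zero_right N_zero G_one by (intro bexI[of _ 1]) auto
next
  case (addcl_add x y)
  obtain g where g: "g \<in> G" "1 - g \<in> m" "act g y \<in> N" using addcl_add by auto
  obtain Bk where Bk: "Bk \<in> blocks sc G R" "Bk \<noteq> B" "x \<in> V Bk"
    using addcl_add(1) by auto
  obtain m' where m': "m' \<in> Wset G Bk" "\<forall>z\<in>m'. act z x \<in> N" and xM: "x \<in> M"
    using Bk(3) unfolding vsub_def by auto
  have tm: "tsideal G m" using Wset_tsideal[OF blocks_subset_cfs[OF B] m] .
  have tm': "tsideal G m'" using Wset_tsideal[OF blocks_subset_cfs[OF Bk(1)] m'(1)] .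
  obtain p q where pq: "p \<in> m" "q \<in> m'" "p + q = 1"
    using Wset_comaximal[OF B Bk(1) Bk(2)[symmetric] m m'(1)] unfolding comaximal_def by auto
  have yM: "y \<in> M" using addcl_add(2) others_subset unfolding others_def by auto
  have qG: "q \<in> G" using tsideal_subset[OF tm'] pq by auto
  have "(p + q) * g = p * g + q * g" by (rule distrib_right)
  then have "1 - q * g = (1 - g) + p * g" using pq(3) by (simp add: algebra_simps)
  moreover have "(1 - g) + p * g \<in> m"
    using tsideal_add[OF tm g(2) tsideal_mult_right[OF tm g(1) pq(1)]] .
  ultimately have "1 - q * g \<in> m" by (simp only:)
  moreover have "act (q * g) x \<in> N" using m'(2) tsideal_mult_right[OF tm' g(1) pq(2)] by blast
  moreover have "act (q * g) y \<in> N" using N_act[OF g(3)] act_mult[OF yM] by simp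
  ultimately show ?case
    using qG g(1) G_mult N_add act_add_right[OF xM yM] by (metis (no_types, lifting))
qed

lemma vsub_others_trivial:
  assumes B: "B \<in> blocks sc G R" and z: "z \<in> V B" and ob: "ob \<in> others B" and "z - ob \<in> N"
  shows "z \<in> N"
proof -
  obtain m where m: "m \<in> Wset G B" "\<forall>x\<in>m. act x z \<in> N" and zM: "z \<in> M"
    using z unfolding vsub_def by auto
  obtain g where g: "g \<in> G" "1 - g \<in> m" "act g ob \<in> N" using others_killed[OF B m(1) ob] by auto
  have obM: "ob \<in> M" using others_subset ob by auto
  have "act g z - act g ob \<in> N" using N_act[OF \<open>z - ob \<in> N\<close>] act_diff_right[OF zM obM] by simp
  then have "act g z \<in> N" using N_add[OF _ g(3)] by fastforce
  moreover have "z - act g z \<in> N" using m(2) g(2) act_diff_left[OF zM] act_one[OF zM] by fastforce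
  ultimately show ?thesis using N_add by fastforce
qed

lemma block_mod_decompose:
  assumes bm: "block_mod sc G R M N act" and B: "B \<in> blocks sc G R" and v: "v \<in> M"
  shows "\<exists>vB\<in>V B. \<exists>ob\<in>others B. v - vB - ob \<in> N"
proof -
  obtain f where f: "block_family sc G R M N act f" and fv: "v - (\<Sum>Bk\<in>{Bk. f Bk \<noteq> 0}. f Bk) \<in> N"
    using bm v unfolding block_mod_def by blast
  let ?S = "{Bk. f Bk \<noteq> 0}"
  have fin: "finite ?S" and fam: "\<And>Bk. f Bk \<noteq> 0 \<Longrightarrow> Bk \<in> blocks sc G R \<and> f Bk \<in> V Bk"
    using f unfolding block_family_def by blast+
  have "f B \<in> V B" using fam vsub_zero by (cases "f B = 0") auto
  moreover have "(\<Sum>Bk\<in>?S - {B}. f Bk) \<in> others B"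
  proof (rule others_sum)
    fix Bk assume "Bk \<in> ?S - {B}"
    then show "f Bk \<in> others B" using fam[of Bk] others_base[of Bk B] by auto
  qed (use fin in auto)
  moreover have "(\<Sum>Bk\<in>?S. f Bk) = f B + (\<Sum>Bk\<in>?S - {B}. f Bk)"
    using fin by (cases "B \<in> ?S") (auto simp: sum.remove)
  ultimately show ?thesis
    using fv by (intro bexI[of _ "f B"] bexI[of _ "\<Sum>Bk\<in>?S - {B}. f Bk"]) (auto simp: algebra_simps)
qed

end

section \<open>The block B of the left regular quotients A/Am\<close>

locale hc_block = block_algebra sc G R for sc :: "'k::field \<Rightarrow> 'a::ring_1 \<Rightarrow> 'a" and G R +
  fixes B :: "'a set set"
  assumes strong_hc: "strong_HC_block_subalg sc G R" and B_block: "B \<in> cfs sc G // R"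
    and noeth: "noetherian G" and fg_left: "a_hat_fg_left G B"
begin

lemma B_blocks: "B \<in> blocks sc G R"
  using B_block unfolding blocks_def .

lemma B_subset_cfs: "B \<subseteq> cfs sc G"
  using blocks_subset_cfs[OF B_blocks] .

lemma Wset_B_tsideal: "n \<in> Wset G B \<Longrightarrow> tsideal G n"
  using Wset_tsideal[OF B_subset_cfs] .

lemma Wset_B_fin_codim: "n \<in> Wset G B \<Longrightarrow> fin_codim sc G n"
  unfolding Wset_def using fin_codim_ideal_prod[OF noeth] B_subset_cfs by blast

text \<open>Only the images of constant families a \<in> A in A(B,B) are used: writing them in terms of
  the finitely many generators and then reducing the coefficients modulo n shows that
  A/(nA + Am) is finite-dimensional.\<close>

lemma two_sided_quotient_fin_dim:
  assumes n: "n \<in> Wset G B" and m: "m \<in> Wset G B"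
  shows "\<exists>T. finite T \<and> (\<forall>a. \<exists>y\<in>vs.span T. a - y \<in> two_sided_denom n m)"
proof -
  obtain Gs where Gs: "finite Gs"
    and gen: "\<forall>y\<in>a_hat G B. \<exists>c. (\<forall>g\<in>Gs. c g \<in> gamma_hat G B) \<and>
        (\<forall>n\<in>Wset G B. \<forall>m\<in>Wset G B. y (n, m) - (\<Sum>g\<in>Gs. c g n * g (n, m)) \<in> two_sided_denom n m)"
    using fg_left unfolding a_hat_fg_left_def by blast
  obtain S where S: "finite S" "\<forall>x\<in>G. \<exists>y\<in>vs.span S. x - y \<in> n"
    using Wset_B_fin_codim[OF n] unfolding fin_codim_span by blast
  let ?T = "\<Union>g\<in>Gs. (\<lambda>s. s * g (n, m)) ` S"
  have "\<exists>y\<in>vs.span ?T. a - y \<in> two_sided_denom n m" for a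
  proof -
    have "(\<lambda>_. a) \<in> a_hat G B"
      unfolding a_hat_def two_sided_denom_def by (simp add: addcl.addcl_zero)
    from bspec[OF gen this] obtain c where c: "\<forall>g\<in>Gs. c g \<in> gamma_hat G B"
      and "\<forall>n\<in>Wset G B. \<forall>m\<in>Wset G B. a - (\<Sum>g\<in>Gs. c g n * g (n, m)) \<in> two_sided_denom n m"
      by blast
    then have a: "a - (\<Sum>g\<in>Gs. c g n * g (n, m)) \<in> two_sided_denom n m" using n m by blast
    have "c g n \<in> G" if "g \<in> Gs" for g
      using c that n unfolding gamma_hat_def by blast
    then have "\<forall>g\<in>Gs. \<exists>y. y \<in> vs.span S \<and> c g n - y \<in> n"
      using S(2) by blast
    from bchoice[OF this] obtain d where d: "\<forall>g\<in>Gs. d g \<in> vs.span S \<and> c g n - d g \<in> n" ..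
    have "(\<Sum>g\<in>Gs. (c g n - d g) * g (n, m)) \<in> two_sided_denom n m"
      unfolding two_sided_denom_def
      by (rule addcl_sum[OF Gs], rule addcl_base) (use d in blast)
    then have "(a - (\<Sum>g\<in>Gs. c g n * g (n, m))) + (\<Sum>g\<in>Gs. (c g n - d g) * g (n, m))
        \<in> two_sided_denom n m"
      using a unfolding two_sided_denom_def by (rule addcl_add_closed[rotated])
    moreover have "(a - (\<Sum>g\<in>Gs. c g n * g (n, m))) + (\<Sum>g\<in>Gs. (c g n - d g) * g (n, m))
        = a - (\<Sum>g\<in>Gs. d g * g (n, m))"
      by (simp add: left_diff_distrib sum_subtractf)
    moreover have "(\<Sum>g\<in>Gs. d g * g (n, m)) \<in> vs.span ?T"
    proof (rule vs.span_sum)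
      fix g assume "g \<in> Gs"
      then have "(\<lambda>s. s * g (n, m)) ` S \<subseteq> ?T" by blast
      then show "d g * g (n, m) \<in> vs.span ?T"
        using span_mult_right[of "d g" S "g (n, m)"] d \<open>g \<in> Gs\<close> vs.span_mono by blast
    qed
    ultimately show ?thesis by (intro bexI[of _ "\<Sum>g\<in>Gs. d g * g (n, m)"]) simp_all
  qed
  moreover have "finite ?T" using Gs S(1) by blast
  ultimately show ?thesis by (intro exI[of _ ?T]) auto
qed

end

definition Am :: "'a::ring_1 set \<Rightarrow> 'a set" where
  "Am m = addcl {a * x | a x. x \<in> m}"

lemma Am_zero: "0 \<in> Am m"
  unfolding Am_def by (rule addcl.addcl_zero)

lemma Am_add: "x \<in> Am m \<Longrightarrow> y \<in> Am m \<Longrightarrow> x + y \<in> Am m"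
  unfolding Am_def by (rule addcl_add_closed)

lemma Am_uminus: "x \<in> Am m \<Longrightarrow> - x \<in> Am m"
  unfolding Am_def
proof (erule addcl_uminus)
  fix y assume "y \<in> {a * x | a x. x \<in> m}"
  then obtain a x where "x \<in> m" "y = a * x" by blast
  then have "- y = (- a) * x" "x \<in> m" by simp_all
  then show "- y \<in> {a * x | a x. x \<in> m}" by blast
qed

lemma Am_mult: "x \<in> Am m \<Longrightarrow> b * x \<in> Am m"
  unfolding Am_def
proof (induction rule: addcl.induct)
  case (addcl_add u y)
  then obtain a x where ax: "x \<in> m" "u = a * x" by blast
  then have "b * u = (b * a) * x" by (simp add: mult.assoc)
  then have "b * u \<in> {a * x | a x. x \<in> m}" using ax(1) by blast
  then show ?case using addcl_add(3) by (simp add: distrib_left addcl.addcl_add)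
qed (simp add: addcl.addcl_zero)

lemma amod_regular: "amod (UNIV :: 'a::ring_1 set) (*)"
  unfolding amod_def by (simp add: distrib_left distrib_right mult.assoc)

locale regular_quotient = hc_block sc G R B for sc :: "'k::field \<Rightarrow> 'a::ring_1 \<Rightarrow> 'a" and G R B +
  fixes m :: "'a set"
  assumes m_Wset: "m \<in> Wset G B"
begin

sublocale P: quotient_module sc G R "UNIV :: 'a set" "(*)" "Am m"
  by unfold_locales (auto simp: amod_regular Am_zero Am_add Am_uminus Am_mult)

lemma regular_strong_block_mod: "strong_block_mod sc G R (UNIV :: 'a set) (Am m) (*)"
  using strong_hc B_blocks m_Wset unfolding strong_HC_block_subalg_def Am_def by blast

lemma regular_vsub_killed: "\<exists>n\<in>Wset G B. \<forall>x\<in>n. \<forall>v\<in>P.V B. x * v \<in> Am m"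
  using regular_strong_block_mod B_blocks unfolding strong_block_mod_def by blast

lemma regular_decompose: "\<exists>vB\<in>P.V B. \<exists>ob\<in>P.others B. v - vB - ob \<in> Am m"
proof -
  have "block_mod sc G R (UNIV :: 'a set) (Am m) (*)"
    using regular_strong_block_mod unfolding strong_block_mod_def by blast
  from P.block_mod_decompose[OF this B_blocks] show ?thesis by blast
qed

lemma regular_vsub_span:
  assumes "S \<subseteq> P.V B" shows "vs.span S \<subseteq> P.V B"
proof (rule vs.span_minimal[OF assms])
  have "sc c x \<in> P.V B" if "x \<in> P.V B" for c x
    using P.vsub_act_G[OF B_subset_cfs G_scalar that] scale_eq_mult[of c x] by simp
  then show "vs.subspace (P.V B)"
    unfolding vs.subspace_def using P.vsub_zero P.vsub_add[OF B_subset_cfs] by blast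
qed

lemma nA_mod_others:
  assumes n: "n \<in> Wset G B" and killed: "\<forall>x\<in>n. \<forall>v\<in>P.V B. x * v \<in> Am m"
    and y: "y \<in> addcl {x * a | x a. x \<in> n}"
  shows "\<exists>ob\<in>P.others B. y - ob \<in> Am m"
  using y
proof (induction rule: addcl.induct)
  case addcl_zero
  then show ?case using P.others_zero Am_zero by force
next
  case (addcl_add u y)
  obtain oy where oy: "oy \<in> P.others B" "y - oy \<in> Am m" using addcl_add(3) by blast
  obtain x b where xb: "x \<in> n" "u = x * b" using addcl_add(1) by blast
  have xG: "x \<in> G" using tsideal_subset[OF Wset_B_tsideal[OF n]] xb(1) by blast
  obtain bB ob where bB: "bB \<in> P.V B" "ob \<in> P.others B" "b - bB - ob \<in> Am m"
    using regular_decompose by blast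
  have "x * bB \<in> Am m" using killed xb(1) bB(1) by blast
  then have "x * bB + x * (b - bB - ob) + (y - oy) \<in> Am m"
    using Am_mult[OF bB(3)] oy(2) Am_add by blast
  moreover have "x * bB + x * (b - bB - ob) + (y - oy) = (u + y) - (x * ob + oy)"
    using xb(2) by (simp add: algebra_simps)
  moreover have "x * ob + oy \<in> P.others B" using P.others_act_G[OF xG bB(2)] oy(1) P.others_add by simp
  ultimately show ?case by (intro bexI[of _ "x * ob + oy"]) simp_all
qed

lemma span_decompose:
  assumes dec: "\<And>t. t \<in> T \<Longrightarrow> \<exists>ob\<in>P.others B. t - \<beta> t - ob \<in> Am m"
    and "y \<in> vs.span T"
  shows "\<exists>yB\<in>vs.span (\<beta> ` T). \<exists>ob\<in>P.others B. y - yB - ob \<in> Am m"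
  using \<open>y \<in> vs.span T\<close>
proof (induction rule: vs.span_induct_alt)
  case base
  then show ?case using vs.span_zero P.others_zero Am_zero by force
next
  case (step c x y)
  obtain yB ob where y: "yB \<in> vs.span (\<beta> ` T)" "ob \<in> P.others B" "y - yB - ob \<in> Am m"
    using step(2) by blast
  obtain obx where x: "obx \<in> P.others B" "x - \<beta> x - obx \<in> Am m" using dec step(1) by blast
  show ?case
  proof (intro bexI)
    have "sc c 1 * (x - \<beta> x - obx) + (y - yB - ob) \<in> Am m"
      using Am_mult[OF x(2)] y(3) Am_add by blast
    moreover have "sc c 1 * (x - \<beta> x - obx) + (y - yB - ob)
        = (sc c x + y) - (sc c (\<beta> x) + yB) - (sc c 1 * obx + ob)"
      by (simp add: scale_eq_mult[of c x] scale_eq_mult[of c "\<beta> x"] algebra_simps)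
    ultimately show "(sc c x + y) - (sc c (\<beta> x) + yB) - (sc c 1 * obx + ob) \<in> Am m" by simp
    show "sc c 1 * obx + ob \<in> P.others B"
      using P.others_act_G[OF G_scalar x(1)] y(2) P.others_add by simp
    have "\<beta> x \<in> vs.span (\<beta> ` T)" using step(1) by (intro vs.span_base) simp
    then show "sc c (\<beta> x) + yB \<in> vs.span (\<beta> ` T)" using y(1) vs.span_add vs.span_scale by blast
  qed
qed

lemma regular_vsub_fin_dim:
  "\<exists>T. finite T \<and> T \<subseteq> P.V B \<and> (\<forall>a\<in>P.V B. \<exists>y\<in>vs.span T. a - y \<in> Am m)"
proof -
  obtain n where n: "n \<in> Wset G B" and killed: "\<forall>x\<in>n. \<forall>v\<in>P.V B. x * v \<in> Am m"
    using regular_vsub_killed by blast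
  obtain T0 where T0: "finite T0" "\<forall>a. \<exists>y\<in>vs.span T0. a - y \<in> two_sided_denom n m"
    using two_sided_quotient_fin_dim[OF n m_Wset] by blast
  have "\<forall>t. \<exists>tB. tB \<in> P.V B \<and> (\<exists>ob\<in>P.others B. t - tB - ob \<in> Am m)"
    using regular_decompose by blast
  from choice[OF this] obtain \<beta>
    where "\<forall>t. \<beta> t \<in> P.V B \<and> (\<exists>ob\<in>P.others B. t - \<beta> t - ob \<in> Am m)" ..
  then have \<beta>: "\<And>t. \<beta> t \<in> P.V B" "\<And>t. \<exists>ob\<in>P.others B. t - \<beta> t - ob \<in> Am m"
    by blast+
  have span_\<beta>: "vs.span (\<beta> ` T0) \<subseteq> P.V B" using \<beta>(1) regular_vsub_span by blast
  have "\<exists>y\<in>vs.span (\<beta> ` T0). a - y \<in> Am m" if a: "a \<in> P.V B" for a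
  proof -
    obtain y where y: "y \<in> vs.span T0" "a - y \<in> two_sided_denom n m" using T0(2) by blast
    then obtain u z where uz: "u \<in> addcl {x * b | x b. x \<in> n}" "z \<in> Am m" "a - y = u + z"
      unfolding two_sided_denom_def Am_def using addcl_Un_split by blast
    obtain ou where ou: "ou \<in> P.others B" "u - ou \<in> Am m" using nA_mod_others[OF n killed uz(1)] by blast
    obtain yB ob where yB: "yB \<in> vs.span (\<beta> ` T0)" "ob \<in> P.others B" "y - yB - ob \<in> Am m"
      using span_decompose[OF \<beta>(2) y(1)] by blast
    have "(u - ou) + z + (y - yB - ob) \<in> Am m" using ou(2) uz(2) yB(3) Am_add by blast
    moreover have "(u - ou) + z + (y - yB - ob) = (a - yB) - (ou + ob)"
      using uz(3) by (simp add: algebra_simps)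
    ultimately have "(a - yB) - (ou + ob) \<in> Am m" by simp
    moreover have "a - yB \<in> P.V B" using P.vsub_diff[OF B_subset_cfs a] yB(1) span_\<beta> by blast
    moreover have "ou + ob \<in> P.others B" using P.others_add ou(1) yB(2) by blast
    ultimately have "a - yB \<in> Am m" using P.vsub_others_trivial[OF B_blocks] by blast
    then show ?thesis using yB(1) by blast
  qed
  then show ?thesis using T0(1) \<beta>(1) by (intro exI[of _ "\<beta> ` T0"]) blast
qed

end

section \<open>Simple modules: finite-dimensionality of V(B)\<close>

locale simple_module = hc_block sc G R B for sc :: "'k::field \<Rightarrow> 'a::ring_1 \<Rightarrow> 'a" and G R B +
  fixes M :: "'m::ab_group_add set" and act :: "'a \<Rightarrow> 'm \<Rightarrow> 'm"
  assumes simple: "simple_amod M act"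
begin

lemma amod_M: "amod M act"
  using simple unfolding simple_amod_def by blast

sublocale V: quotient_module sc G R M act "{0}"
  by unfold_locales (auto simp: amod_M amodule.M_zero[OF amodule.intro[OF amod_M]]
      amodule.act_zero_right[OF amodule.intro[OF amod_M]])

lemma cyclic: "v \<in> M \<Longrightarrow> v \<noteq> 0 \<Longrightarrow> u \<in> M \<Longrightarrow> \<exists>a. u = act a v"
  using V.simple_cyclic[OF simple] .

end

text \<open>The A-module map A/Am \<rightarrow> V, a \<mapsto> a w, for a vector w killed by m.\<close>

locale regular_to_simple = simple_module sc G R B M act + regular_quotient sc G R B m
  for sc :: "'k::field \<Rightarrow> 'a::ring_1 \<Rightarrow> 'a" and G R B and M :: "'m::ab_group_add set" and act m +
  fixes w :: 'm
  assumes w_M: "w \<in> M" and w_killed: "\<forall>x\<in>m. act x w = 0"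
begin

lemma act_Am: "z \<in> Am m \<Longrightarrow> act z w = 0"
  unfolding Am_def
proof (induction rule: addcl.induct)
  case addcl_zero
  then show ?case using V.act_zero_left[OF w_M] by simp
next
  case (addcl_add u y)
  then obtain a x where "x \<in> m" "u = a * x" by blast
  then have "act u w = 0" using w_killed V.act_mult[OF w_M] V.act_zero_right by simp
  then show ?case using addcl_add(3) V.act_add_left[OF w_M] by simp
qed

lemma act_regular_vsub:
  assumes "y \<in> P.V Bk" shows "act y w \<in> V.V Bk"
proof -
  obtain k where k: "k \<in> Wset G Bk" "\<forall>x\<in>k. x * y \<in> Am m" using assms unfolding vsub_def by auto
  have "act x (act y w) \<in> {0}" if "x \<in> k" for x
    using act_Am[of "x * y"] k(2) that V.act_mult[OF w_M, of x y] by simp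
  then have "\<forall>x\<in>k. act x (act y w) \<in> {0}" by blast
  then show ?thesis unfolding vsub_def using k(1) V.M_act[OF w_M] by blast
qed

lemma act_regular_others:
  "y \<in> P.others B \<Longrightarrow> act y w \<in> V.others B"
  unfolding P.others_def
proof (induction rule: addcl.induct)
  case addcl_zero
  then show ?case using V.act_zero_left[OF w_M] V.others_zero by simp
next
  case (addcl_add u y)
  then obtain Bk where "Bk \<in> blocks sc G R" "Bk \<noteq> B" "u \<in> P.V Bk" by blast
  then have "act u w \<in> V.others B" using V.others_base act_regular_vsub by blast
  then show ?case using addcl_add(3) V.others_add V.act_add_left[OF w_M] by simp
qed

lemma act_block_component:
  assumes u: "u \<in> V.V B" "u = act a w"
    and a: "aB \<in> P.V B" "ob \<in> P.others B" "a - aB - ob \<in> Am m"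
  shows "u = act aB w"
proof -
  have "act a w = act aB w + act ob w + act (a - aB - ob) w"
    using V.act_add_left[OF w_M] by (metis diff_add_cancel add.commute add.left_commute)
  then have "(u - act aB w) - act ob w = 0" using u(2) act_Am[OF a(3)] by simp
  moreover have "u - act aB w \<in> V.V B" using V.vsub_diff[OF B_subset_cfs u(1) act_regular_vsub[OF a(1)]] .
  ultimately have "u - act aB w \<in> {0}"
    using V.vsub_others_trivial[OF B_blocks _ act_regular_others[OF a(2)]] by simp
  then show ?thesis by simp
qed

end

context simple_module
begin

lemma simple_vsub_fin_dim: "fin_dim sc act (V.V B)"
proof (cases "V.V B \<subseteq> {0}")
  case True
  then show ?thesis unfolding fin_dim_def by (intro exI[of _ "{}"]) auto
next
  case False
  then obtain v where v: "v \<in> V.V B" "v \<noteq> 0" by blast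
  then obtain m where m: "m \<in> Wset G B" "\<forall>x\<in>m. act x v = 0" and vM: "v \<in> M"
    unfolding vsub_def by auto
  interpret R: regular_to_simple sc G R B M act m v
    by unfold_locales (use m vM in auto)
  obtain T where T: "finite T" "T \<subseteq> R.P.V B" and span_T: "\<forall>a\<in>R.P.V B. \<exists>y\<in>vs.span T. a - y \<in> Am m"
    using R.regular_vsub_fin_dim by blast
  have "\<exists>c. u = (\<Sum>s\<in>(\<lambda>t. act t v) ` T. act (sc (c s) 1) s)" if u: "u \<in> V.V B" for u
  proof -
    obtain a where a: "u = act a v" using cyclic[OF vM v(2)] u V.vsub_subset by blast
    obtain aB ob where aB: "aB \<in> R.P.V B" "ob \<in> R.P.others B" "a - aB - ob \<in> Am m"
      using R.regular_decompose by blast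
    obtain y where y: "y \<in> vs.span T" "aB - y \<in> Am m" using span_T aB(1) by blast
    obtain c where c: "y = (\<Sum>t\<in>T. sc (c t) t)" using span_finite_sum[OF T(1) y(1)] by blast
    have "u = act aB v" using R.act_block_component[OF u a aB] .
    also have "\<dots> = act y v" using R.act_Am[OF y(2)] V.act_diff_left[OF vM] by simp
    also have "\<dots> = (\<Sum>t\<in>T. act (sc (c t) t) v)"
      unfolding c by (rule V.act_sum_left[OF T(1) vM])
    also have "\<dots> = (\<Sum>t\<in>T. act (sc (c t) 1) (act t v))"
      by (rule sum.cong[OF refl]) (subst scale_eq_mult, rule V.act_mult[OF vM])
    finally have "u = (\<Sum>t\<in>T. act (sc (c t) 1) (act t v))" .
    moreover obtain c' where "(\<Sum>t\<in>T. act (sc (c t) 1) (act t v))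
        = (\<Sum>s\<in>(\<lambda>t. act t v) ` T. act (sc (c' s) 1) s)"
      using V.act_lincomb_image[OF T(1), of "\<lambda>t. act t v" c] V.M_act[OF vM] by blast
    ultimately show ?thesis by (intro exI[of _ c']) simp
  qed
  moreover have "(\<lambda>t. act t v) ` T \<subseteq> V.V B" using R.act_regular_vsub T(2) by blast
  ultimately show ?thesis
    unfolding fin_dim_def using T(1) by (intro exI[of _ "(\<lambda>t. act t v) ` T"]) auto
qed

end

section \<open>Chains of left ideals through the block B\<close>

context block_algebra
begin

lemma dim_strict_mono_in_span:
  assumes W: "finite W" and U1: "vs.subspace U1" and U2: "vs.subspace U2"
    and "U1 \<subset> U2" and "U2 \<subseteq> vs.span W"
  shows "vs.dim U1 < vs.dim U2"
proof -
  obtain B1 where B1: "B1 \<subseteq> U1" "vs.independent B1" "U1 \<subseteq> vs.span B1" "card B1 = vs.dim U1"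
    using vs.basis_exists by blast
  obtain B2 where B2: "B2 \<subseteq> U2" "vs.independent B2" "U2 \<subseteq> vs.span B2" "card B2 = vs.dim U2"
    using vs.basis_exists by blast
  obtain x where x: "x \<in> U2" "x \<notin> U1" using \<open>U1 \<subset> U2\<close> by blast
  have "x \<notin> vs.span B1" using x vs.span_minimal[OF B1(1) U1] by blast
  then have ind: "vs.independent (insert x B1)" using vs.independent_insertI[OF _ B1(2)] by simp
  have "B2 \<subseteq> vs.span W" using B2(1) \<open>U2 \<subseteq> vs.span W\<close> by blast
  then have fin: "finite B2" using vs.independent_span_bound[OF W B2(2)] by simp
  have "insert x B1 \<subseteq> vs.span B2" using x(1) B1(1) \<open>U1 \<subset> U2\<close> B2(3) by blast
  then have "finite (insert x B1) \<and> card (insert x B1) \<le> card B2"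
    by (rule vs.independent_span_bound[OF fin ind])
  moreover have "x \<notin> B1" using x(2) B1(1) by blast
  ultimately have "card (insert x B1) = Suc (card B1)" "card (insert x B1) \<le> card B2" by auto
  then show ?thesis using B1(4) B2(4) by simp
qed

end

context regular_quotient
begin

definition Am_lideal :: "'a set \<Rightarrow> bool" where
  "Am_lideal L \<longleftrightarrow> 0 \<in> L \<and> (\<forall>x\<in>L. \<forall>y\<in>L. x + y \<in> L) \<and> (\<forall>x\<in>L. - x \<in> L) \<and>
     (\<forall>a. \<forall>x\<in>L. a * x \<in> L) \<and> Am m \<subseteq> L"

lemma Am_lideal_zero: "Am_lideal L \<Longrightarrow> 0 \<in> L"
  and Am_lideal_add: "Am_lideal L \<Longrightarrow> x \<in> L \<Longrightarrow> y \<in> L \<Longrightarrow> x + y \<in> L"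
  and Am_lideal_uminus: "Am_lideal L \<Longrightarrow> x \<in> L \<Longrightarrow> - x \<in> L"
  and Am_lideal_mult: "Am_lideal L \<Longrightarrow> x \<in> L \<Longrightarrow> a * x \<in> L"
  and Am_lideal_Am: "Am_lideal L \<Longrightarrow> Am m \<subseteq> L"
  unfolding Am_lideal_def by blast+

lemma Am_lideal_diff: "Am_lideal L \<Longrightarrow> x \<in> L \<Longrightarrow> y \<in> L \<Longrightarrow> x - y \<in> L"
  using Am_lideal_add Am_lideal_uminus by (metis diff_conv_add_uminus)

lemma Am_lideal_UNIV: "Am_lideal UNIV"
  unfolding Am_lideal_def by blast

lemma Am_lideal_bottom: "Am_lideal (Am m)"
  unfolding Am_lideal_def using Am_zero Am_add Am_uminus Am_mult by blast

lemma Am_lideal_Int: "Am_lideal K1 \<Longrightarrow> Am_lideal K2 \<Longrightarrow> Am_lideal (K1 \<inter> K2)"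
  unfolding Am_lideal_def by blast

lemma Am_lideal_plus:
  assumes K1: "Am_lideal K1" and K2: "Am_lideal K2"
  shows "Am_lideal {k1 + k2 | k1 k2. k1 \<in> K1 \<and> k2 \<in> K2}" (is "Am_lideal ?K")
  unfolding Am_lideal_def
proof (intro conjI ballI allI)
  show "0 \<in> ?K" using Am_lideal_zero[OF K1] Am_lideal_zero[OF K2] by force
  show "Am m \<subseteq> ?K" using Am_lideal_Am[OF K1] Am_lideal_zero[OF K2] by force
  fix x assume "x \<in> ?K"
  then obtain a b where ab: "a \<in> K1" "b \<in> K2" "x = a + b" by blast
  show "x + y \<in> ?K" if y: "y \<in> ?K" for y
  proof -
    obtain c d where cd: "c \<in> K1" "d \<in> K2" "y = c + d" using y by blast
    have "x + y = (a + c) + (b + d)" using ab cd by (simp add: algebra_simps)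
    then show ?thesis using ab cd Am_lideal_add[OF K1] Am_lideal_add[OF K2] by blast
  qed
  have "- x = (- a) + (- b)" using ab by simp
  then show "- x \<in> ?K" using ab Am_lideal_uminus[OF K1] Am_lideal_uminus[OF K2] by blast
  fix c
  have "c * x = c * a + c * b" using ab by (simp add: distrib_left)
  then show "c * x \<in> ?K" using ab Am_lideal_mult[OF K1] Am_lideal_mult[OF K2] by blast
qed

lemma Am_lideal_subspace:
  assumes "Am_lideal L" shows "vs.subspace L"
  unfolding vs.subspace_def
proof (intro conjI ballI allI)
  show "0 \<in> L" using Am_lideal_zero[OF assms] .
  show "x + y \<in> L" if "x \<in> L" "y \<in> L" for x y using Am_lideal_add[OF assms that] .
  show "sc c x \<in> L" if "x \<in> L" for c x
    using Am_lideal_mult[OF assms that, of "sc c 1"] scale_eq_mult[of c x] by simp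
qed

lemma Am_lideal_block_component:
  assumes L: "Am_lideal L" and z: "z \<in> L"
    and zB: "zB \<in> P.V B" and ob: "ob \<in> P.others B" and d: "z - zB - ob \<in> Am m"
  shows "zB \<in> L"
proof -
  obtain k where k: "k \<in> Wset G B" "\<forall>x\<in>k. x * zB \<in> Am m" using zB unfolding vsub_def by auto
  obtain g where g: "g \<in> G" "1 - g \<in> k" "g * ob \<in> Am m" using P.others_killed[OF B_blocks k(1) ob] by auto
  have n1: "(1 - g) * zB \<in> L" using k(2) g(2) Am_lideal_Am[OF L] by blast
  have n2: "g * z \<in> L" using Am_lideal_mult[OF L z] .
  have n3: "g * ob \<in> L" using g(3) Am_lideal_Am[OF L] by blast
  have n4: "g * (z - zB - ob) \<in> L" using Am_mult[OF d] Am_lideal_Am[OF L] by blast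
  have "(1 - g) * zB + g * z - g * ob - g * (z - zB - ob) \<in> L"
    using Am_lideal_diff[OF L Am_lideal_diff[OF L Am_lideal_add[OF L n1 n2] n3] n4] .
  moreover have "(1 - g) * zB + g * z - g * ob - g * (z - zB - ob) = zB" by (simp add: algebra_simps)
  ultimately show ?thesis by simp
qed

lemma vsub_plus_components:
  assumes K1: "Am_lideal K1" and K2: "Am_lideal K2"
    and y: "y \<in> P.V B" "y = k1 + k2" "k1 \<in> K1" "k2 \<in> K2"
  shows "\<exists>k1B\<in>K1 \<inter> P.V B. \<exists>k2B\<in>K2 \<inter> P.V B. y - k1B - k2B \<in> Am m"
proof -
  obtain k1B o1 where d1: "k1B \<in> P.V B" "o1 \<in> P.others B" "k1 - k1B - o1 \<in> Am m"
    using regular_decompose by blast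
  obtain k2B o2 where d2: "k2B \<in> P.V B" "o2 \<in> P.others B" "k2 - k2B - o2 \<in> Am m"
    using regular_decompose by blast
  have "(k1 - k1B - o1) + (k2 - k2B - o2) \<in> Am m" using Am_add d1(3) d2(3) by blast
  moreover have "(k1 - k1B - o1) + (k2 - k2B - o2) = (y - k1B - k2B) - (o1 + o2)"
    using y(2) by (simp add: algebra_simps)
  ultimately have "(y - k1B - k2B) - (o1 + o2) \<in> Am m" by simp
  moreover have "y - k1B - k2B \<in> P.V B"
    using P.vsub_diff[OF B_subset_cfs P.vsub_diff[OF B_subset_cfs y(1) d1(1)] d2(1)] .
  moreover have "o1 + o2 \<in> P.others B" using P.others_add d1(2) d2(2) by blast
  ultimately have "y - k1B - k2B \<in> Am m" using P.vsub_others_trivial[OF B_blocks] by blast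
  moreover have "k1B \<in> K1" using Am_lideal_block_component[OF K1 y(3) d1] .
  moreover have "k2B \<in> K2" using Am_lideal_block_component[OF K2 y(4) d2] .
  ultimately show ?thesis using d1(1) d2(1) by blast
qed

definition B_span :: "'a set" where
  "B_span = (SOME T. finite T \<and> T \<subseteq> P.V B \<and> (\<forall>a\<in>P.V B. \<exists>y\<in>vs.span T. a - y \<in> Am m))"

lemma B_span: "finite B_span" "B_span \<subseteq> P.V B" "\<forall>a\<in>P.V B. \<exists>y\<in>vs.span B_span. a - y \<in> Am m"
  using someI_ex[OF regular_vsub_fin_dim] unfolding B_span_def[symmetric] by blast+

text \<open>Intersecting with the span of the finite set B_span keeps the dimension finite
  (vs.dim is a junk value on infinite-dimensional spaces).\<close>

definition B_dim :: "'a set \<Rightarrow> nat" where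
  "B_dim L = vs.dim (vs.span B_span \<inter> L)"

lemma B_dim_strict_mono:
  assumes X: "Am_lideal X" and Y: "Am_lideal Y" and "X \<subseteq> Y" and "X \<inter> P.V B \<noteq> Y \<inter> P.V B"
  shows "B_dim X < B_dim Y"
proof -
  obtain a where a: "a \<in> Y" "a \<in> P.V B" "a \<notin> X" using assms(3,4) by blast
  obtain t where t: "t \<in> vs.span B_span" "a - t \<in> Am m" using B_span(3) a(2) by blast
  have "t \<in> Y" using Am_lideal_diff[OF Y a(1), of "a - t"] t(2) Am_lideal_Am[OF Y] by auto
  moreover have "t \<notin> X"
  proof
    assume "t \<in> X"
    then have "(a - t) + t \<in> X" using Am_lideal_add[OF X] t(2) Am_lideal_Am[OF X] by blast
    then show False using a(3) by simp
  qed
  ultimately have "vs.span B_span \<inter> X \<subset> vs.span B_span \<inter> Y" using assms(3) t(1) by blast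
  then show ?thesis
    unfolding B_dim_def
    by (intro dim_strict_mono_in_span[OF B_span(1)] vs.subspace_inter vs.subspace_span
        Am_lideal_subspace X Y) auto
qed

definition B_minimal :: "'a set \<Rightarrow> 'a set \<Rightarrow> bool" where
  "B_minimal X Y \<longleftrightarrow> (\<forall>K. Am_lideal K \<and> X \<subseteq> K \<and> K \<subseteq> Y \<longrightarrow>
     K \<inter> P.V B = X \<inter> P.V B \<or> K \<inter> P.V B = Y \<inter> P.V B)"

definition B_chain :: "nat \<Rightarrow> (nat \<Rightarrow> 'a set) \<Rightarrow> bool" where
  "B_chain r c \<longleftrightarrow> (\<forall>j\<le>r. Am_lideal (c j)) \<and> (\<forall>j<r. c j \<subseteq> c (Suc j) \<and> B_minimal (c j) (c (Suc j)))"

lemma B_chain_append: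
  assumes c1: "B_chain r1 c1" and c2: "B_chain r2 c2" and "c1 r1 = c2 0"
  shows "B_chain (r1 + r2) (\<lambda>j. if j \<le> r1 then c1 j else c2 (j - r1))"
proof -
  let ?c = "\<lambda>j. if j \<le> r1 then c1 j else c2 (j - r1)"
  have shift: "?c j = c2 (j - r1)" if "r1 \<le> j" for j
    using that \<open>c1 r1 = c2 0\<close> by (cases "j = r1") auto
  have "Am_lideal (?c j)" if "j \<le> r1 + r2" for j
    using that c1 c2 unfolding B_chain_def by (cases "j \<le> r1") auto
  moreover have "?c j \<subseteq> ?c (Suc j) \<and> B_minimal (?c j) (?c (Suc j))" if "j < r1 + r2" for j
  proof (cases "j < r1")
    case True
    then show ?thesis using c1 unfolding B_chain_def by simp
  next
    case False
    then have "?c j = c2 (j - r1)" "?c (Suc j) = c2 (Suc (j - r1))" "j - r1 < r2"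
      using shift[of j] shift[of "Suc j"] that by (auto simp: Suc_diff_le)
    then show ?thesis using c2 unfolding B_chain_def by simp
  qed
  ultimately show ?thesis unfolding B_chain_def by blast
qed

lemma B_chain_exists:
  "Am_lideal X \<Longrightarrow> Am_lideal Y \<Longrightarrow> X \<subseteq> Y \<Longrightarrow> \<exists>r c. c 0 = X \<and> c r = Y \<and> B_chain r c"
proof (induction "B_dim Y - B_dim X" arbitrary: X Y rule: less_induct)
  case less
  show ?case
  proof (cases "B_minimal X Y")
    case True
    then have "B_chain 1 (\<lambda>j. if j = 0 then X else Y)"
      using less.prems unfolding B_chain_def by (auto simp: le_Suc_eq)
    then show ?thesis by (intro exI[of _ 1] exI[of _ "\<lambda>j. if j = 0 then X else Y"]) simp
  next
    case False
    then obtain K where K: "Am_lideal K" "X \<subseteq> K" "K \<subseteq> Y"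
      "K \<inter> P.V B \<noteq> X \<inter> P.V B" "K \<inter> P.V B \<noteq> Y \<inter> P.V B"
      unfolding B_minimal_def by blast
    have "B_dim X < B_dim K" using B_dim_strict_mono[OF less.prems(1) K(1,2)] K(4) by metis
    moreover have "B_dim K < B_dim Y" using B_dim_strict_mono[OF K(1) less.prems(2) K(3,5)] .
    ultimately obtain r1 c1 r2 c2 where
      "c1 0 = X" "c1 r1 = K" "B_chain r1 c1" "c2 0 = K" "c2 r2 = Y" "B_chain r2 c2"
      using less.hyps[OF _ less.prems(1) K(1,2)] less.hyps[OF _ K(1) less.prems(2) K(3)]
      by (metis diff_less_mono diff_less_mono2 less_imp_le_nat less_trans)
    then show ?thesis
      using B_chain_append[of r1 c1 r2 c2]
      by (intro exI[of _ "r1 + r2"] exI[of _ "\<lambda>j. if j \<le> r1 then c1 j else c2 (j - r1)"]) auto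
  qed
qed

end

context regular_quotient
begin

text \<open>Otherwise K1 + K2 reaches L, and the B-components of y in K1 and K2 would lie in L'.\<close>

lemma B_minimal_unique:
  assumes L': "Am_lideal L'" and L: "Am_lideal L" and K1: "Am_lideal K1" and K2: "Am_lideal K2"
    and "L' \<subseteq> K1" "K1 \<subseteq> L" "K2 \<subseteq> L"
    and B1: "K1 \<inter> P.V B = L' \<inter> P.V B" and B2: "K2 \<inter> P.V B = L' \<inter> P.V B"
    and max: "\<And>K. Am_lideal K \<Longrightarrow> K1 \<subseteq> K \<Longrightarrow> K \<subseteq> L \<Longrightarrow> \<not> K \<subseteq> K1 \<Longrightarrow> L \<subseteq> K"
    and y: "y \<in> L" "y \<in> P.V B" "y \<notin> K1"
  shows "K2 \<subseteq> K1"
proof (rule ccontr)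
  assume "\<not> K2 \<subseteq> K1"
  let ?K = "{k1 + k2 | k1 k2. k1 \<in> K1 \<and> k2 \<in> K2}"
  have "K1 \<subseteq> ?K" using Am_lideal_zero[OF K2] by force
  moreover have "?K \<subseteq> L" using Am_lideal_add[OF L] \<open>K1 \<subseteq> L\<close> \<open>K2 \<subseteq> L\<close> by blast
  moreover have "K2 \<subseteq> ?K" using Am_lideal_zero[OF K1] by force
  then have "\<not> ?K \<subseteq> K1" using \<open>\<not> K2 \<subseteq> K1\<close> by blast
  ultimately have "L \<subseteq> ?K" by (rule max[OF Am_lideal_plus[OF K1 K2]])
  then obtain k1 k2 where "y = k1 + k2" "k1 \<in> K1" "k2 \<in> K2" using y(1) by blast
  then obtain k1B k2B where "k1B \<in> K1 \<inter> P.V B" "k2B \<in> K2 \<inter> P.V B" "y - k1B - k2B \<in> Am m"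
    using vsub_plus_components[OF K1 K2 y(2)] by blast
  then have k: "k1B \<in> L'" "k2B \<in> L'" "y - k1B - k2B \<in> L'"
    using B1 B2 Am_lideal_Am[OF L'] by blast+
  have "(y - k1B - k2B) + k1B + k2B \<in> L'" using Am_lideal_add[OF L'] k by blast
  then show False using y(3) \<open>L' \<subseteq> K1\<close> by auto
qed

end

context regular_to_simple
begin

lemma Am_lideal_ann: "Am_lideal {a. act a w = 0}"
  unfolding Am_lideal_def
proof (intro conjI ballI allI)
  show "0 \<in> {a. act a w = 0}" using V.act_zero_left[OF w_M] by simp
  show "x + y \<in> {a. act a w = 0}" if "x \<in> {a. act a w = 0}" "y \<in> {a. act a w = 0}" for x y
    using that V.act_add_left[OF w_M] by simp
  show "- x \<in> {a. act a w = 0}" if "x \<in> {a. act a w = 0}" for x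
    using that V.act_uminus_left[OF w_M] by simp
  show "a * x \<in> {a. act a w = 0}" if "x \<in> {a. act a w = 0}" for a x
    using that V.act_mult[OF w_M] V.act_zero_right by simp
  show "Am m \<subseteq> {a. act a w = 0}" using act_Am by blast
qed

lemma ann_B_witness:
  assumes u: "u \<in> V.V B" "u \<noteq> 0" and L: "Am_lideal L" and x: "x \<in> L" "act x w \<noteq> 0"
  shows "\<exists>y\<in>L \<inter> P.V B. act y w \<noteq> 0"
proof -
  obtain b where "u = act b (act x w)"
    using cyclic[OF V.M_act[OF w_M] x(2)] u(1) V.vsub_subset by blast
  then have u_eq: "u = act (b * x) w" using V.act_mult[OF w_M] by simp
  obtain yB ob where d: "yB \<in> P.V B" "ob \<in> P.others B" "b * x - yB - ob \<in> Am m"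
    using regular_decompose by blast
  have "yB \<in> L" using Am_lideal_block_component[OF L Am_lideal_mult[OF L x(1)] d] .
  moreover have "u = act yB w" using act_block_component[OF u(1) u_eq d] .
  ultimately show ?thesis using d(1) u(2) by blast
qed

lemma ann_Int_B_part:
  assumes u: "u \<in> V.V B" "u \<noteq> 0" and L': "Am_lideal L'" and L: "Am_lideal L"
    and "L' \<subseteq> L" "L' \<subseteq> {a. act a w = 0}" "\<not> L \<subseteq> {a. act a w = 0}" and "B_minimal L' L"
  shows "({a. act a w = 0} \<inter> L) \<inter> P.V B = L' \<inter> P.V B"
proof -
  let ?K = "{a. act a w = 0} \<inter> L"
  have "?K \<inter> P.V B = L' \<inter> P.V B \<or> ?K \<inter> P.V B = L \<inter> P.V B"
    using \<open>B_minimal L' L\<close> Am_lideal_Int[OF Am_lideal_ann L] assms(5,6)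
    unfolding B_minimal_def by blast
  moreover obtain x where "x \<in> L" "act x w \<noteq> 0" using assms(7) by blast
  then obtain y where "y \<in> L \<inter> P.V B" "act y w \<noteq> 0" using ann_B_witness[OF u L] by blast
  then have "?K \<inter> P.V B \<noteq> L \<inter> P.V B" by blast
  ultimately show ?thesis by blast
qed

text \<open>Since V is simple, the annihilator of w is a maximal left ideal, so its trace on L is
  maximal below L.\<close>

lemma ann_Int_maximal:
  assumes L: "Am_lideal L" and K: "Am_lideal K"
    and "{a. act a w = 0} \<inter> L \<subseteq> K" "K \<subseteq> L" "\<not> K \<subseteq> {a. act a w = 0} \<inter> L"
  shows "L \<subseteq> K"
proof
  obtain k where k: "k \<in> K" "act k w \<noteq> 0" using assms(4,5) by blast
  fix y assume y: "y \<in> L"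
  obtain b where "act y w = act b (act k w)" using cyclic[OF V.M_act[OF w_M] k(2) V.M_act[OF w_M]] by blast
  then have "act (y - b * k) w = 0" using V.act_mult[OF w_M] V.act_diff_left[OF w_M] by simp
  moreover have "y - b * k \<in> L" using Am_lideal_diff[OF L y Am_lideal_mult[OF L]] k(1) assms(4) by blast
  ultimately have "y - b * k \<in> K" using assms(3) by blast
  then have "(y - b * k) + b * k \<in> K" using Am_lideal_add[OF K] Am_lideal_mult[OF K k(1)] by blast
  then show "y \<in> K" by simp
qed

lemma ann_cut:
  assumes u: "u \<in> V.V B" "u \<noteq> 0" and L': "Am_lideal L'" and L: "Am_lideal L"
    and LL: "L' \<subseteq> L" and cut: "L' \<subseteq> {a. act a w = 0}" "\<not> L \<subseteq> {a. act a w = 0}"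
    and Bmin: "B_minimal L' L"
  shows "Am_lideal ({a. act a w = 0} \<inter> L)" and "L' \<subseteq> {a. act a w = 0} \<inter> L"
    and "{a. act a w = 0} \<inter> L \<subseteq> L"
    and "({a. act a w = 0} \<inter> L) \<inter> P.V B = L' \<inter> P.V B"
    and "\<And>K. Am_lideal K \<Longrightarrow> {a. act a w = 0} \<inter> L \<subseteq> K \<Longrightarrow> K \<subseteq> L \<Longrightarrow>
      \<not> K \<subseteq> {a. act a w = 0} \<inter> L \<Longrightarrow> L \<subseteq> K"
    and "\<exists>y. y \<in> L \<and> y \<in> P.V B \<and> y \<notin> {a. act a w = 0} \<inter> L"
proof -
  show "Am_lideal ({a. act a w = 0} \<inter> L)" using Am_lideal_Int[OF Am_lideal_ann L] .
  show "L' \<subseteq> {a. act a w = 0} \<inter> L" "{a. act a w = 0} \<inter> L \<subseteq> L" using LL cut(1) by auto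
  show "({a. act a w = 0} \<inter> L) \<inter> P.V B = L' \<inter> P.V B"
    using ann_Int_B_part[OF u L' L LL cut Bmin] .
  show "\<And>K. Am_lideal K \<Longrightarrow> {a. act a w = 0} \<inter> L \<subseteq> K \<Longrightarrow> K \<subseteq> L \<Longrightarrow>
      \<not> K \<subseteq> {a. act a w = 0} \<inter> L \<Longrightarrow> L \<subseteq> K"
    using ann_Int_maximal[OF L] by blast
  obtain x where "x \<in> L" "act x w \<noteq> 0" using cut(2) by blast
  then show "\<exists>y. y \<in> L \<and> y \<in> P.V B \<and> y \<notin> {a. act a w = 0} \<inter> L"
    using ann_B_witness[OF u L] by blast
qed

lemma ann_cuts_chain:
  assumes "w \<noteq> 0" "c 0 = Am m" "c r = UNIV"
  shows "\<exists>j<r. c j \<subseteq> {a. act a w = 0} \<and> \<not> c (Suc j) \<subseteq> {a. act a w = 0}"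
proof (rule subset_chain_cut)
  show "c 0 \<subseteq> {a. act a w = 0}" using act_Am assms(2) by blast
  have "1 \<notin> {a. act a w = 0}" using V.act_one[OF w_M] assms(1) by simp
  then show "\<not> c r \<subseteq> {a. act a w = 0}" using assms(3) by blast
qed

end

context simple_module
begin

lemma killed_by_factor:
  "v \<in> M \<Longrightarrow> v \<noteq> 0 \<Longrightarrow> \<forall>x\<in>ideal_prod G ms. act x v = 0 \<Longrightarrow>
    \<exists>p\<in>set ms. \<exists>w\<in>M. w \<noteq> 0 \<and> (\<forall>x\<in>p. act x w = 0)"
proof (induction ms arbitrary: v)
  case Nil
  then show ?case using G_one V.act_one by auto
next
  case (Cons p ms)
  show ?case
  proof (cases "\<forall>x\<in>ideal_prod G ms. act x v = 0")
    case True
    then show ?thesis using Cons.IH[OF Cons.prems(1,2)] by auto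
  next
    case False
    then obtain y where y: "y \<in> ideal_prod G ms" "act y v \<noteq> 0" by blast
    have "act x (act y v) = 0" if "x \<in> p" for x
      using Cons.prems(3) ideal_mult_mem[OF that y(1)] by (simp flip: V.act_mult[OF Cons.prems(1)])
    then show ?thesis using y(2) V.M_act[OF Cons.prems(1)] by auto
  qed
qed

lemma supp_killed_by_prod:
  assumes "B \<in> supp sc G R M {0} act" and "set ms0 = B"
  shows "\<exists>w\<in>M. w \<noteq> 0 \<and> (\<forall>x\<in>ideal_prod G ms0. act x w = 0)"
proof -
  obtain v where v: "v \<in> V.V B" "v \<noteq> 0" using assms(1) unfolding supp_def by blast
  then obtain ms where "\<forall>x\<in>ideal_prod G ms. act x v = 0" "set ms \<subseteq> B" "v \<in> M"
    unfolding vsub_def Wset_def by auto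
  then obtain p w where "p \<in> B" "w \<in> M" "w \<noteq> 0" "\<forall>x\<in>p. act x w = 0"
    using killed_by_factor[of v ms] v(2) by blast
  moreover have "ideal_prod G ms0 \<subseteq> p"
    using ideal_prod_subset_factor \<open>p \<in> B\<close> assms(2) B_subset_cfs cfs_tsideal by blast
  ultimately show ?thesis by blast
qed

end

context regular_quotient
begin

text \<open>The traces of both annihilators on L coincide by B_minimal_unique; hence so do the
  annihilators of x w1 and x w2 for any x \<in> L.\<close>

lemma B_minimal_step_iso:
  assumes simple1: "simple_amod (M1 :: 'm::ab_group_add set) act1"
    and simple2: "simple_amod (M2 :: 'm set) act2"
    and w1: "w1 \<in> M1" "\<forall>x\<in>m. act1 x w1 = 0" and u1: "u1 \<in> vsub G M1 {0} act1 B" "u1 \<noteq> 0"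
    and w2: "w2 \<in> M2" "\<forall>x\<in>m. act2 x w2 = 0" and u2: "u2 \<in> vsub G M2 {0} act2 B" "u2 \<noteq> 0"
    and L': "Am_lideal L'" and L: "Am_lideal L" and LL: "L' \<subseteq> L" and Bmin: "B_minimal L' L"
    and cut1: "L' \<subseteq> {a. act1 a w1 = 0}" "\<not> L \<subseteq> {a. act1 a w1 = 0}"
    and cut2: "L' \<subseteq> {a. act2 a w2 = 0}" "\<not> L \<subseteq> {a. act2 a w2 = 0}"
  shows "amod_iso M1 act1 M2 act2"
proof -
  interpret S1: regular_to_simple sc G R B M1 act1 m w1 by unfold_locales (use simple1 w1 in auto)
  interpret S2: regular_to_simple sc G R B M2 act2 m w2 by unfold_locales (use simple2 w2 in auto)
  let ?K1 = "{a. act1 a w1 = 0} \<inter> L" and ?K2 = "{a. act2 a w2 = 0} \<inter> L"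
  note c1 = S1.ann_cut[OF u1 L' L LL cut1 Bmin] and c2 = S2.ann_cut[OF u2 L' L LL cut2 Bmin]
  obtain y1 where y1: "y1 \<in> L" "y1 \<in> P.V B" "y1 \<notin> ?K1" using c1(6) by blast
  obtain y2 where y2: "y2 \<in> L" "y2 \<in> P.V B" "y2 \<notin> ?K2" using c2(6) by blast
  have "?K2 \<subseteq> ?K1" by (rule B_minimal_unique[OF L' L c1(1) c2(1) c1(2,3) c2(3) c1(4) c2(4) c1(5) y1])
  moreover have "?K1 \<subseteq> ?K2" by (rule B_minimal_unique[OF L' L c2(1) c1(1) c2(2,3) c1(3) c2(4) c1(4) c2(5) y2])
  ultimately have same_ann: "?K1 = ?K2" by blast
  obtain x where x: "x \<in> L" "act1 x w1 \<noteq> 0" using cut1(2) by blast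
  then have "\<forall>a. act1 (a * x) w1 = 0 \<longleftrightarrow> act2 (a * x) w2 = 0"
    using same_ann Am_lideal_mult[OF L x(1)] by blast
  then show ?thesis by (rule simple_amod_iso_same_ann[OF simple1 simple2 w1(1) w2(1) x(2)])
qed

lemma B_chain_step_iso:
  assumes chain: "B_chain r c" "j < r"
    and simple1: "simple_amod (M1 :: 'm::ab_group_add set) act1" "B \<in> supp sc G R M1 {0} act1"
    and simple2: "simple_amod (M2 :: 'm set) act2" "B \<in> supp sc G R M2 {0} act2"
    and w1: "w1 \<in> M1" "\<forall>x\<in>m. act1 x w1 = 0"
    and w2: "w2 \<in> M2" "\<forall>x\<in>m. act2 x w2 = 0"
    and cut1: "c j \<subseteq> {a. act1 a w1 = 0}" "\<not> c (Suc j) \<subseteq> {a. act1 a w1 = 0}"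
    and cut2: "c j \<subseteq> {a. act2 a w2 = 0}" "\<not> c (Suc j) \<subseteq> {a. act2 a w2 = 0}"
  shows "amod_iso M1 act1 M2 act2"
proof -
  have step: "Am_lideal (c j)" "Am_lideal (c (Suc j))" "c j \<subseteq> c (Suc j)" "B_minimal (c j) (c (Suc j))"
    using chain unfolding B_chain_def by auto
  obtain u1 where u1: "u1 \<in> vsub G M1 {0} act1 B" "u1 \<noteq> 0" using simple1(2) unfolding supp_def by auto
  obtain u2 where u2: "u2 \<in> vsub G M2 {0} act2 B" "u2 \<noteq> 0" using simple2(2) unfolding supp_def by auto
  show ?thesis by (rule B_minimal_step_iso[OF simple1(1) simple2(1) w1 u1 w2 u2 step cut1 cut2])
qed

end

lemma finite_representatives:
  fixes idx :: "'p \<Rightarrow> nat"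
  assumes "\<forall>p\<in>Q. idx p < r" and "\<And>p q. p \<in> Q \<Longrightarrow> q \<in> Q \<Longrightarrow> idx p = idx q \<Longrightarrow> E p q"
  shows "\<exists>F. finite F \<and> (\<forall>p\<in>Q. \<exists>q\<in>F. E p q)"
proof (intro exI conjI)
  define rep where "rep j = (SOME q. q \<in> Q \<and> idx q = j)" for j
  have rep: "rep (idx p) \<in> Q \<and> idx (rep (idx p)) = idx p" if "p \<in> Q" for p
    unfolding rep_def by (rule someI[of _ p]) (use that in simp)
  have "idx ` Q \<subseteq> {..<r}" using assms(1) by auto
  then show "finite (rep ` idx ` Q)" using finite_subset by blast
  show "\<forall>p\<in>Q. \<exists>q\<in>rep ` idx ` Q. E p q"
  proof
    fix p assume "p \<in> Q"
    then have "E p (rep (idx p))" using assms(2)[of p "rep (idx p)"] rep by simp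
    then show "\<exists>q\<in>rep ` idx ` Q. E p q" using \<open>p \<in> Q\<close> by blast
  qed
qed

section \<open>Finitely many simple modules with B in their support\<close>

context hc_block
begin

lemma simple_iso_classes_finite:
  assumes "finite B"
  shows "\<exists>F :: ('m::ab_group_add set \<times> ('a \<Rightarrow> 'm \<Rightarrow> 'm)) set. finite F \<and>
    (\<forall>p\<in>{p. simple_amod (fst p) (snd p) \<and> B \<in> supp sc G R (fst p) {0} (snd p)}.
      \<exists>q\<in>F. amod_iso (fst p) (snd p) (fst q) (snd q))"
proof -
  let ?Q = "{p :: 'm set \<times> ('a \<Rightarrow> 'm \<Rightarrow> 'm). simple_amod (fst p) (snd p) \<and> B \<in> supp sc G R (fst p) {0} (snd p)}"
  obtain ms0 where ms0: "set ms0 = B" using finite_list[OF assms] by blast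
  define m0 where "m0 = ideal_prod G ms0"
  interpret R0: regular_quotient sc G R B m0
    by unfold_locales (use ms0 in \<open>auto simp: m0_def Wset_def\<close>)
  obtain r c where c: "c 0 = Am m0" "c r = UNIV" "R0.B_chain r c"
    using R0.B_chain_exists[OF R0.Am_lideal_bottom R0.Am_lideal_UNIV subset_UNIV] by blast
  have "\<forall>p\<in>?Q. \<exists>w. w \<in> fst p \<and> w \<noteq> 0 \<and> (\<forall>x\<in>m0. snd p x w = 0)"
  proof
    fix p assume p: "p \<in> ?Q"
    interpret simple_module sc G R B "fst p" "snd p" by unfold_locales (use p in simp)
    show "\<exists>w. w \<in> fst p \<and> w \<noteq> 0 \<and> (\<forall>x\<in>m0. snd p x w = 0)"
      using supp_killed_by_prod[OF _ ms0] p unfolding m0_def by auto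
  qed
  from bchoice[OF this] obtain w
    where w: "\<forall>p\<in>?Q. w p \<in> fst p \<and> w p \<noteq> 0 \<and> (\<forall>x\<in>m0. snd p x (w p) = 0)" ..
  have "\<forall>p\<in>?Q. \<exists>j. j < r \<and> c j \<subseteq> {a. snd p a (w p) = 0} \<and> \<not> c (Suc j) \<subseteq> {a. snd p a (w p) = 0}"
  proof
    fix p assume p: "p \<in> ?Q"
    have wp: "w p \<in> fst p" "w p \<noteq> 0" "\<forall>x\<in>m0. snd p x (w p) = 0" using bspec[OF w p] by auto
    interpret S: regular_to_simple sc G R B "fst p" "snd p" m0 "w p"
      by unfold_locales (use p wp in auto)
    show "\<exists>j. j < r \<and> c j \<subseteq> {a. snd p a (w p) = 0} \<and> \<not> c (Suc j) \<subseteq> {a. snd p a (w p) = 0}"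
      using S.ann_cuts_chain[OF wp(2) c(1,2)] by blast
  qed
  from bchoice[OF this] obtain idx where idx: "\<forall>p\<in>?Q. idx p < r \<and>
      c (idx p) \<subseteq> {a. snd p a (w p) = 0} \<and> \<not> c (Suc (idx p)) \<subseteq> {a. snd p a (w p) = 0}" ..
  have "\<forall>p\<in>?Q. idx p < r" using idx by blast
  moreover have "amod_iso (fst p) (snd p) (fst q) (snd q)"
    if "p \<in> ?Q" "q \<in> ?Q" "idx p = idx q" for p q
    using R0.B_chain_step_iso[OF c(3), of "idx p" "fst p" "snd p" "fst q" "snd q" "w p" "w q"]
      that bspec[OF w that(1)] bspec[OF w that(2)] bspec[OF idx that(1)] bspec[OF idx that(2)]
    by auto
  ultimately show ?thesis by (rule finite_representatives)
qed

end

theorem mainTheorem3: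
  fixes sc :: "'k::field \<Rightarrow> 'a::ring_1 \<Rightarrow> 'a"
    and G :: "'a set"
    and R :: "('a set \<times> 'a set) set"
    and B :: "'a set set"
  assumes "k_algebra sc"
    and "subalgebra sc G"
    and "equiv (cfs sc G) R"
    and "strong_HC_block_subalg sc G R"
    and "B \<in> cfs sc G // R"
    and "finite B"
    and "noetherian G"
    and "a_hat_fg_left G B"
    and "a_hat_fg_right G B"
  shows "(\<exists>F :: ('m::ab_group_add set \<times> ('a \<Rightarrow> 'm \<Rightarrow> 'm)) set. finite F \<and>
            (\<forall>(M :: 'm set) act. simple_amod M act \<and> hc_block_mod sc G R M act \<and>
                B \<in> supp sc G R M {0} act \<longrightarrow>
                (\<exists>(M', act') \<in> F. amod_iso M act M' act')))
       \<and> (\<forall>(M :: 'm set) act. simple_amod M act \<and> hc_block_mod sc G R M act \<longrightarrow>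
                fin_dim sc act (vsub G M {0} act B))"
proof -
  interpret hc_block sc G R B
    by unfold_locales (use assms in auto)
  obtain F :: "('m set \<times> ('a \<Rightarrow> 'm \<Rightarrow> 'm)) set" where "finite F"
    and F: "\<forall>p\<in>{p. simple_amod (fst p) (snd p) \<and> B \<in> supp sc G R (fst p) {0} (snd p)}.
      \<exists>q\<in>F. amod_iso (fst p) (snd p) (fst q) (snd q)"
    using simple_iso_classes_finite[OF \<open>finite B\<close>] by blast
  have "\<exists>(M', act') \<in> F. amod_iso M act M' act'"
    if "simple_amod M act" "B \<in> supp sc G R M {0} act" for M :: "'m set" and act
    using F that by fastforce
  moreover have "fin_dim sc act (vsub G M {0} act B)" if "simple_amod M act" for M :: "'m set" and act
  proof -
    interpret simple_module sc G R B M act by unfold_locales (rule that)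
    show ?thesis by (rule simple_vsub_fin_dim)
  qed
  ultimately show ?thesis using \<open>finite F\<close> by blast
qed

end
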